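(* Let $\Phi(x,y)=-\phi(x-y)$. For any proper, lsc, convex $f:\mathbb R^n\to\overline{\mathbb R}$ the following are equivalent: (i) $f$ is a-smooth; (ii) $-f$ is left $\Phi$-convex; (iii) $f^*-\phi^*$ is convex (i.e. $f^*$ is B-strongly convex relative to $\phi^*$); (iv) $f=g\,\square\,\phi$ for some proper, lsc, convex $g:\mathbb R^n\to\overline{\mathbb R}$; (v) $-f$ is a-weakly convex.
   Context: Standing assumption: $\phi:\mathbb R^n\to\mathbb R$ is convex, finite-valued, differentiable and strictly convex (Legendre with full domain), super-coercive; $\phi^*$ has the same properties and $\nabla\phi^*=(\nabla\phi)^{-1}$. Infimal convolution: $(g\,\square\,\phi)(x)=\inf_y g(y)+\phi(x-y)$. A proper lsc $h$ is a-weakly convex if for every $(\bar x,\bar v)\in\operatorname{graph}\partial h$ ($\partial$ the limiting subdifferential): $h(x)\ge h(\bar x)-\phi(x-\bar x+\nabla\phi^*(-\bar v))+\phi(\nabla\phi^*(-\bar v))$ for all $x$; $f$ is a-smooth if $f$ is real-valued and continuously differentiable and both $f$ and $-f$ are a-weakly convex. Left $\Phi$-convex: $h=\sup_{i\in I}\Phi(\cdot,y_i)-\beta_i$ for some family $(y_i,\beta_i)\in\mathbb R^n\times\overline{\mathbb R}$. *)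

theory Defs
  imports "HOL-Analysis.Analysis" "HOL-Library.Extended_Real"
begin

definition proper_fun :: "('a \<Rightarrow> ereal) \<Rightarrow> bool" where
  "proper_fun f \<longleftrightarrow> (\<forall>x. f x \<noteq> -\<infinity>) \<and> (\<exists>x. f x \<noteq> \<infinity>)"

definition lsc_fun :: "('a::topological_space \<Rightarrow> ereal) \<Rightarrow> bool" where
  "lsc_fun f \<longleftrightarrow> (\<forall>x. f x \<le> Liminf (at x) f)"

text \<open>Convexity of an extended-real-valued function (for functions never equal to minus infinity
  this is convexity of the epigraph).\<close>
definition ereal_convex :: "('a::real_vector \<Rightarrow> ereal) \<Rightarrow> bool" where
  "ereal_convex f \<longleftrightarrow> (\<forall>x y t. 0 < t \<and> t < 1 \<longrightarrow>
      f (t *\<^sub>R x + (1 - t) *\<^sub>R y) \<le> ereal t * f x + ereal (1 - t) * f y)"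

definition strictly_convex :: "('a::real_vector \<Rightarrow> real) \<Rightarrow> bool" where
  "strictly_convex f \<longleftrightarrow> (\<forall>x y t. x \<noteq> y \<and> 0 < t \<and> t < 1 \<longrightarrow>
      f (t *\<^sub>R x + (1 - t) *\<^sub>R y) < t * f x + (1 - t) * f y)"

definition super_coercive :: "('a::real_normed_vector \<Rightarrow> real) \<Rightarrow> bool" where
  "super_coercive f \<longleftrightarrow> filterlim (\<lambda>x. f x / norm x) at_top at_infinity"

definition fconj :: "('a::real_inner \<Rightarrow> ereal) \<Rightarrow> 'a \<Rightarrow> ereal" where
  "fconj f v = (SUP x. ereal (v \<bullet> x) - f x)"

definition infconv :: "('a::real_vector \<Rightarrow> ereal) \<Rightarrow> ('a \<Rightarrow> real) \<Rightarrow> 'a \<Rightarrow> ereal" where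
  "infconv g \<phi> x = (INF y. g y + ereal (\<phi> (x - y)))"

text \<open>Regular (Frechet) subdifferential, written out via its epsilon-delta unfolding
  of  liminf_{y->x} (h y - h x - <v,y-x>)/|y-x| >= 0.\<close>
definition frechet_subdiff :: "('a::real_inner \<Rightarrow> ereal) \<Rightarrow> 'a \<Rightarrow> 'a set" where
  "frechet_subdiff h x = {v. \<bar>h x\<bar> \<noteq> \<infinity> \<and>
     (\<forall>e>0. \<exists>d>0. \<forall>y. norm (y - x) < d \<longrightarrow>
        h x + ereal (v \<bullet> (y - x)) - ereal (e * norm (y - x)) \<le> h y)}"

definition limiting_subdiff :: "('a::real_inner \<Rightarrow> ereal) \<Rightarrow> 'a \<Rightarrow> 'a set" where
  "limiting_subdiff h x = {v. \<exists>xs vs. xs \<longlonglongrightarrow> x \<and> (\<lambda>k. h (xs k)) \<longlonglongrightarrow> h x \<and>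
       (\<forall>k. vs k \<in> frechet_subdiff h (xs k)) \<and> vs \<longlonglongrightarrow> v}"

text \<open>a-weak convexity w.r.t. phi; Dphis is the gradient of the conjugate phi*.\<close>
definition a_weakly_convex ::
  "('a::real_inner \<Rightarrow> real) \<Rightarrow> ('a \<Rightarrow> 'a) \<Rightarrow> ('a \<Rightarrow> ereal) \<Rightarrow> bool" where
  "a_weakly_convex \<phi> Dphis h \<longleftrightarrow> proper_fun h \<and> lsc_fun h \<and>
     (\<forall>xb vb. vb \<in> limiting_subdiff h xb \<longrightarrow>
        (\<forall>x. h x \<ge> h xb - ereal (\<phi> (x - xb + Dphis (- vb))) + ereal (\<phi> (Dphis (- vb)))))"

definition a_smooth ::
  "('a::real_inner \<Rightarrow> real) \<Rightarrow> ('a \<Rightarrow> 'a) \<Rightarrow> ('a \<Rightarrow> ereal) \<Rightarrow> bool" where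
  "a_smooth \<phi> Dphis f \<longleftrightarrow> (\<forall>x. \<bar>f x\<bar> \<noteq> \<infinity>) \<and>
     (\<exists>G. (\<forall>x. ((\<lambda>z. real_of_ereal (f z)) has_derivative (\<lambda>h. G x \<bullet> h)) (at x))
          \<and> continuous_on UNIV G) \<and>
     a_weakly_convex \<phi> Dphis f \<and> a_weakly_convex \<phi> Dphis (\<lambda>x. - f x)"

text \<open>Left Phi-convexity for the coupling Phi(x,y) = - phi(x - y): h is a pointwise supremum
  of functions Phi(., y_i) - beta_i over some family (y_i, beta_i) in R^n x ereal
  (the family is represented by its set of pairs).\<close>
definition left_Phi_convex :: "('a::real_vector \<Rightarrow> real) \<Rightarrow> ('a \<Rightarrow> ereal) \<Rightarrow> bool" where
  "left_Phi_convex \<phi> h \<longleftrightarrow> (\<exists>S :: ('a \<times> ereal) set.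
     \<forall>x. h x = (SUP p\<in>S. ereal (- \<phi> (x - fst p)) - snd p))"

end

theory Submission
  imports Defs
begin

text \<open>
  All five conditions are pinned down by duality and by the fact that, at every point, \<open>f\<close>
  is touched from above by a translate \<open>f(x\<^sub>0) + \<phi>(\<cdot> - x\<^sub>0 + z) - \<phi>(z)\<close>.
  (iv)\<open>\<Rightarrow>\<close>(v): for \<open>f = g \<box> \<phi>\<close> the infimum is attained (super-coercivity), so such a translate
  exists at every point; comparing it with a subgradient \<open>v\<close> of \<open>-f\<close> forces \<open>\<nabla>\<phi>(z) = -v\<close>, which is
  the a-weak convexity inequality of \<open>-f\<close>; limiting subgradients follow by continuity of \<open>\<nabla>\<phi>\<^sup>*\<close>.
  (v)\<open>\<Rightarrow>\<close>(i),(ii): a finite concave function has limiting subgradients everywhere, so (v) gives the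
  touching translates; their supremum represents \<open>-f\<close> as a left \<open>\<Phi>\<close>-convex function, and a convex
  function touched from above by a differentiable one is differentiable there.
  (ii)\<open>\<Rightarrow>\<close>(iii): conjugating \<open>f = inf\<^sub>i \<phi>(\<cdot> - y\<^sub>i) + \<beta>\<^sub>i\<close> gives \<open>f\<^sup>* = \<phi>\<^sup>* + sup\<^sub>i \<langle>\<cdot>, y\<^sub>i\<rangle> - \<beta>\<^sub>i\<close>.
  (iii)\<open>\<Rightarrow>\<close>(iv): \<open>h = f\<^sup>* - \<phi>\<^sup>*\<close> is proper, lsc and convex, and \<open>g = h\<^sup>*\<close> satisfies
  \<open>(g \<box> \<phi>)\<^sup>* = h + \<phi>\<^sup>* = f\<^sup>*\<close>, so \<open>g \<box> \<phi> = f\<close> by Fenchel--Moreau.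
\<close>

section \<open>Lower semicontinuity, epigraphs and affine minorants\<close>

lemma lsc_fun_iff:
  fixes f :: "'a::metric_space \<Rightarrow> ereal"
  shows "lsc_fun f \<longleftrightarrow>
    (\<forall>x (c::real). ereal c < f x \<longrightarrow> (\<exists>e>0. \<forall>y. dist y x < e \<longrightarrow> ereal c < f y))"
proof
  assume L: "lsc_fun f"
  show "\<forall>x (c::real). ereal c < f x \<longrightarrow> (\<exists>e>0. \<forall>y. dist y x < e \<longrightarrow> ereal c < f y)"
  proof (intro allI impI)
    fix x c assume c: "ereal c < f x"
    have "f x = min (f x) (Liminf (at x) f)" using L unfolding lsc_fun_def by (simp add: min_def)
    also have "\<dots> = (SUP e\<in>{0<..}. INF y\<in>ball x e. f y)" by (rule min_Liminf_at)
    finally have "ereal c < (SUP e\<in>{0<..}. INF y\<in>ball x e. f y)" using c by simp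
    then obtain e where e: "e > 0" "ereal c < (INF y\<in>ball x e. f y)" by (auto simp: less_SUP_iff)
    show "\<exists>e>0. \<forall>y. dist y x < e \<longrightarrow> ereal c < f y"
      using e by (intro exI[of _ e]) (auto simp: less_INF_D dist_commute)
  qed
next
  assume R: "\<forall>x (c::real). ereal c < f x \<longrightarrow> (\<exists>e>0. \<forall>y. dist y x < e \<longrightarrow> ereal c < f y)"
  show "lsc_fun f" unfolding lsc_fun_def
  proof
    fix x
    show "f x \<le> Liminf (at x) f" unfolding Liminf_at
    proof (rule dense_le)
      fix c' assume c': "c' < f x"
      show "c' \<le> (SUP e\<in>{0<..}. INF y\<in>ball x e - {x}. f y)"
      proof (cases c')
        case (real c)
        have "ereal c < f x" using c' real by simp
        then obtain e where e: "e > 0" "\<forall>y. dist y x < e \<longrightarrow> ereal c < f y" using R by blast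
        have "c' \<le> (INF y\<in>ball x e - {x}. f y)"
          using e real by (intro INF_greatest) (auto simp: dist_commute intro: less_imp_le)
        also have "\<dots> \<le> (SUP e\<in>{0<..}. INF y\<in>ball x e - {x}. f y)" using e by (auto intro: SUP_upper)
        finally show ?thesis .
      qed (use c' in auto)
    qed
  qed
qed

lemma lsc_fun_LIMSEQ_le:
  fixes f :: "'a::metric_space \<Rightarrow> ereal"
  assumes "lsc_fun f" "X \<longlonglongrightarrow> x" "eventually (\<lambda>k. f (X k) \<le> ereal c) sequentially"
  shows "f x \<le> ereal c"
proof (rule ccontr)
  assume "\<not> ?thesis"
  hence "ereal c < f x" by simp
  then obtain e where e: "e > 0" "\<forall>y. dist y x < e \<longrightarrow> ereal c < f y"
    using assms(1) unfolding lsc_fun_iff by blast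
  have "eventually (\<lambda>k. dist (X k) x < e) sequentially" using assms(2) e(1) by (rule tendstoD)
  with assms(3) have "eventually (\<lambda>k. False) sequentially"
    by eventually_elim (use e in force)
  thus False by simp
qed

lemma lsc_fun_add_continuous:
  fixes f :: "'a::metric_space \<Rightarrow> ereal"
  assumes lf: "lsc_fun f" and c\<psi>: "continuous_on UNIV \<psi>"
  shows "lsc_fun (\<lambda>x. f x + ereal (\<psi> x))"
  unfolding lsc_fun_iff
proof (intro allI impI)
  fix x c assume "ereal c < f x + ereal (\<psi> x)"
  hence "ereal (c - \<psi> x) < f x" by (cases "f x") auto
  then obtain c2 where c2: "ereal (c - \<psi> x) < ereal c2" "ereal c2 < f x" using ereal_dense2 by blast
  obtain e1 where e1: "e1 > 0" "\<forall>y. dist y x < e1 \<longrightarrow> ereal c2 < f y"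
    using lf c2(2) unfolding lsc_fun_iff by blast
  have gap: "c2 - c + \<psi> x > 0" using c2(1) by simp
  obtain e2 where e2: "e2 > 0" "\<forall>y. dist y x < e2 \<longrightarrow> dist (\<psi> y) (\<psi> x) < c2 - c + \<psi> x"
    using c\<psi> gap unfolding continuous_on_iff by (metis UNIV_I)
  show "\<exists>e>0. \<forall>y. dist y x < e \<longrightarrow> ereal c < f y + ereal (\<psi> y)"
  proof (intro exI[of _ "min e1 e2"] conjI allI impI)
    show "0 < min e1 e2" using e1 e2 by simp
    fix y assume y: "dist y x < min e1 e2"
    have fy: "ereal c2 < f y" using e1 y by simp
    have "dist (\<psi> y) (\<psi> x) < c2 - c + \<psi> x" using e2 y by simp
    hence "c - c2 < \<psi> y" unfolding dist_real_def abs_less_iff by linarith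
    thus "ereal c < f y + ereal (\<psi> y)" using fy by (cases "f y") auto
  qed
qed

lemma lsc_fun_continuous:
  fixes F :: "'a::metric_space \<Rightarrow> real"
  assumes "continuous_on UNIV F"
  shows "lsc_fun (\<lambda>x. ereal (F x))"
  unfolding lsc_fun_iff
proof (intro allI impI)
  fix x c assume "ereal c < ereal (F x)"
  hence "F x - c > 0" by simp
  with assms obtain d where "d > 0" "\<forall>y. dist y x < d \<longrightarrow> dist (F y) (F x) < F x - c"
    unfolding continuous_on_iff by (metis UNIV_I)
  thus "\<exists>e>0. \<forall>y. dist y x < e \<longrightarrow> ereal c < ereal (F y)"
    by (intro exI[of _ d]) (auto simp: dist_real_def)
qed

lemma lsc_fun_SUP_affine:
  fixes Y :: "'i \<Rightarrow> 'a::real_inner" and B :: "'i \<Rightarrow> ereal"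
  shows "lsc_fun (\<lambda>v. SUP i\<in>I. ereal (v \<bullet> Y i) - B i)"
  unfolding lsc_fun_iff
proof (intro allI impI)
  fix x c assume "ereal c < (SUP i\<in>I. ereal (x \<bullet> Y i) - B i)"
  then obtain i where i: "i \<in> I" "ereal c < ereal (x \<bullet> Y i) - B i" by (auto simp: less_SUP_iff)
  have upper: "ereal (y \<bullet> Y i) - B i \<le> (SUP i\<in>I. ereal (y \<bullet> Y i) - B i)" for y
    using i(1) by (rule SUP_upper)
  show "\<exists>e>0. \<forall>y. dist y x < e \<longrightarrow> ereal c < (SUP i\<in>I. ereal (y \<bullet> Y i) - B i)"
  proof (cases "B i")
    case (real b)
    with i have gap: "x \<bullet> Y i - b - c > 0" by simp
    define e where "e = (x \<bullet> Y i - b - c) / (norm (Y i) + 1)"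
    have e: "e > 0" unfolding e_def using gap by (intro divide_pos_pos) (simp_all add: add_nonneg_pos)
    have "ereal c < ereal (y \<bullet> Y i) - B i" if y: "dist y x < e" for y
    proof -
      have "\<bar>y \<bullet> Y i - x \<bullet> Y i\<bar> = \<bar>(y - x) \<bullet> Y i\<bar>" by (simp add: inner_diff_left)
      also have "\<dots> \<le> norm (y - x) * norm (Y i)" by (rule Cauchy_Schwarz_ineq2)
      also have "\<dots> \<le> e * norm (Y i)" using y by (intro mult_right_mono) (auto simp: dist_norm)
      also have "\<dots> < e * (norm (Y i) + 1)" using e by simp
      also have "\<dots> = x \<bullet> Y i - b - c" unfolding e_def
        by (metis add_nonneg_pos nonzero_divide_eq_eq norm_ge_zero order_less_irrefl zero_less_one)
      finally show ?thesis using real by simp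
    qed
    with e upper show ?thesis by (meson order_less_le_trans)
  next
    case PInf with i show ?thesis by simp
  next
    case MInf
    hence "ereal c < ereal (y \<bullet> Y i) - B i" for y by simp
    with upper show ?thesis by (meson order_less_le_trans zero_less_one)
  qed
qed

lemma ereal_convex_SUP_affine:
  fixes Y :: "'i \<Rightarrow> 'a::real_inner" and B :: "'i \<Rightarrow> ereal"
  shows "ereal_convex (\<lambda>v. SUP i\<in>I. ereal (v \<bullet> Y i) - B i)"
  unfolding ereal_convex_def
proof (intro allI impI)
  fix x y :: 'a and t :: real assume t: "0 < t \<and> t < 1"
  let ?S = "\<lambda>v. SUP i\<in>I. ereal (v \<bullet> Y i) - B i"
  show "?S (t *\<^sub>R x + (1 - t) *\<^sub>R y) \<le> ereal t * ?S x + ereal (1 - t) * ?S y"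
  proof (rule SUP_least)
    fix i assume i: "i \<in> I"
    have "ereal ((t *\<^sub>R x + (1 - t) *\<^sub>R y) \<bullet> Y i) - B i
        \<le> ereal t * (ereal (x \<bullet> Y i) - B i) + ereal (1 - t) * (ereal (y \<bullet> Y i) - B i)"
    proof (cases "B i")
      case (real b)
      thus ?thesis by (simp add: inner_add_left algebra_simps)
    qed (use t in auto)
    also have "\<dots> \<le> ereal t * ?S x + ereal (1 - t) * ?S y"
      using t i by (intro add_mono ereal_mult_left_mono SUP_upper) auto
    finally show "ereal ((t *\<^sub>R x + (1 - t) *\<^sub>R y) \<bullet> Y i) - B i \<le> ereal t * ?S x + ereal (1 - t) * ?S y" .
  qed
qed

lemma proper_funE:
  assumes "proper_fun f"
  obtains x a where "f x = ereal a"
proof -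
  obtain x where "f x \<noteq> \<infinity>" "f x \<noteq> -\<infinity>" using assms by (auto simp: proper_fun_def)
  thus ?thesis using that by (cases "f x") auto
qed

lemma proper_fun_diff_real:
  assumes "proper_fun f"
  shows "proper_fun (\<lambda>x. f x - ereal (\<psi> x))"
  unfolding proper_fun_def
proof
  show "\<forall>x. f x - ereal (\<psi> x) \<noteq> -\<infinity>"
  proof
    fix x
    have "f x \<noteq> -\<infinity>" using assms by (simp add: proper_fun_def)
    thus "f x - ereal (\<psi> x) \<noteq> -\<infinity>" by (cases "f x") auto
  qed
  obtain x where "f x \<noteq> \<infinity>" using assms by (auto simp: proper_fun_def)
  hence "f x - ereal (\<psi> x) \<noteq> \<infinity>" by (cases "f x") auto
  thus "\<exists>x. f x - ereal (\<psi> x) \<noteq> \<infinity>" ..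
qed

definition epigraph :: "('a \<Rightarrow> ereal) \<Rightarrow> ('a \<times> real) set" where
  "epigraph f = {p. f (fst p) \<le> ereal (snd p)}"

lemma closed_epigraph:
  fixes f :: "'a::metric_space \<Rightarrow> ereal"
  assumes "lsc_fun f" shows "closed (epigraph f)"
  unfolding closed_sequential_limits
proof (intro allI impI, elim conjE)
  fix X l assume X: "\<forall>n. X n \<in> epigraph f" and l: "X \<longlonglongrightarrow> l"
  have fst: "(\<lambda>n. fst (X n)) \<longlonglongrightarrow> fst l" and snd: "(\<lambda>n. snd (X n)) \<longlonglongrightarrow> snd l"
    using tendsto_fst[OF l] tendsto_snd[OF l] by auto
  have "f (fst l) \<le> ereal (snd l) + ereal e" if e: "e > 0" for e
  proof -
    have "eventually (\<lambda>n. dist (snd (X n)) (snd l) < e) sequentially" using snd e by (rule tendstoD)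
    hence "eventually (\<lambda>n. f (fst (X n)) \<le> ereal (snd l + e)) sequentially"
    proof eventually_elim
      case (elim n)
      have "f (fst (X n)) \<le> ereal (snd (X n))" using X by (simp add: epigraph_def)
      also have "\<dots> \<le> ereal (snd l + e)" using elim by (simp add: dist_real_def)
      finally show ?case .
    qed
    from lsc_fun_LIMSEQ_le[OF assms fst this] show ?thesis by simp
  qed
  hence "f (fst l) \<le> ereal (snd l)" by (rule ereal_le_epsilon2) auto
  thus "l \<in> epigraph f" by (simp add: epigraph_def)
qed

lemma convex_epigraph:
  fixes f :: "'a::real_vector \<Rightarrow> ereal"
  assumes "ereal_convex f" shows "convex (epigraph f)"
  unfolding convex_def
proof (intro ballI allI impI)
  fix p q :: "'a \<times> real" and u v :: real
  assume p: "p \<in> epigraph f" and q: "q \<in> epigraph f" and u: "0 \<le> u" and v: "0 \<le> v" and uv: "u + v = 1"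
  show "u *\<^sub>R p + v *\<^sub>R q \<in> epigraph f"
  proof (cases "u = 0 \<or> v = 0")
    case True thus ?thesis using p q uv by auto
  next
    case False
    hence t: "0 < u \<and> u < 1" using u v uv by auto
    have "f (u *\<^sub>R fst p + (1 - u) *\<^sub>R fst q) \<le> ereal u * f (fst p) + ereal (1 - u) * f (fst q)"
      using assms t unfolding ereal_convex_def by blast
    also have "\<dots> \<le> ereal u * ereal (snd p) + ereal (1 - u) * ereal (snd q)"
      using p q t by (intro add_mono ereal_mult_left_mono) (auto simp: epigraph_def)
    moreover have "v = 1 - u" using uv by simp
    ultimately show ?thesis by (simp add: epigraph_def)
  qed
qed

lemma epigraph_separation:
  fixes f :: "'a::euclidean_space \<Rightarrow> ereal"
  assumes "lsc_fun f" "ereal_convex f" "ereal r < f x0"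
  obtains a1 a0 b where "a1 \<bullet> x0 + a0 * r < b" "\<And>x t. f x \<le> ereal t \<Longrightarrow> b < a1 \<bullet> x + a0 * t"
proof -
  have "(x0, r) \<notin> epigraph f" using assms(3) by (simp add: epigraph_def)
  from separating_hyperplane_closed_point[OF convex_epigraph[OF assms(2)] closed_epigraph[OF assms(1)] this]
  obtain a b where ab: "a \<bullet> (x0, r) < b" "\<forall>p\<in>epigraph f. b < a \<bullet> p" by blast
  obtain a1 a0 where "a = (a1, a0)" by (cases a)
  with ab that show ?thesis by (auto simp: epigraph_def inner_Pair)
qed

lemma epigraph_separation_nonneg:
  fixes f :: "'a::euclidean_space \<Rightarrow> ereal"
  assumes "proper_fun f" "\<And>x t. f x \<le> ereal t \<Longrightarrow> b < a1 \<bullet> x + a0 * t"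
  shows "a0 \<ge> 0"
proof (rule ccontr)
  assume neg: "\<not> a0 \<ge> 0"
  obtain x1 s where s: "f x1 = ereal s" using assms(1) by (rule proper_funE)
  define K where "K = a1 \<bullet> x1 + a0 * s - b"
  have K: "K > 0" using assms(2) s by (auto simp: K_def)
  define t where "t = s + K / (- a0)"
  have "K / (- a0) > 0" using K neg by (intro divide_pos_pos) auto
  hence "f x1 \<le> ereal t" using s by (simp add: t_def)
  hence "a1 \<bullet> x1 + a0 * t > b" by (rule assms(2))
  moreover have "a1 \<bullet> x1 + a0 * t = b" using neg by (simp add: t_def K_def field_simps)
  ultimately show False by simp
qed

lemma epigraph_separation_minorant:
  fixes f :: "'a::euclidean_space \<Rightarrow> ereal"
  assumes "proper_fun f" "a0 > 0" "\<And>x t. f x \<le> ereal t \<Longrightarrow> b < a1 \<bullet> x + a0 * t"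
  shows "ereal ((- (1/a0)) *\<^sub>R a1 \<bullet> x + b / a0) \<le> f x"
proof (cases "f x")
  case (real t)
  hence "a1 \<bullet> x + a0 * t > b" using assms(3) by auto
  hence "(- (1/a0)) *\<^sub>R a1 \<bullet> x + b / a0 < t" using assms(2) by (simp add: field_simps)
  thus ?thesis using real by simp
next
  case MInf thus ?thesis using assms(1) by (auto simp: proper_fun_def)
qed simp

lemma affine_minorant_exists:
  fixes f :: "'a::euclidean_space \<Rightarrow> ereal"
  assumes "proper_fun f" "lsc_fun f" "ereal_convex f"
  obtains c d where "\<And>x. ereal (c \<bullet> x + d) \<le> f x"
proof -
  obtain x1 s where s: "f x1 = ereal s" using assms(1) by (rule proper_funE)
  have "ereal (s - 1) < f x1" using s by simp
  then obtain a1 a0 b where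
    ab: "a1 \<bullet> x1 + a0 * (s - 1) < b" "\<And>x t. f x \<le> ereal t \<Longrightarrow> b < a1 \<bullet> x + a0 * t"
    using epigraph_separation[OF assms(2,3)] by blast
  have "a1 \<bullet> x1 + a0 * s > b" using ab(2) s by auto
  with ab(1) have "a0 > 0" by (simp add: algebra_simps)
  from epigraph_separation_minorant[OF assms(1) this ab(2)] that show ?thesis by blast
qed

lemma affine_minorant_above:
  fixes f :: "'a::euclidean_space \<Rightarrow> ereal"
  assumes "proper_fun f" "lsc_fun f" "ereal_convex f" "ereal r < f x0"
  obtains c d where "\<And>x. ereal (c \<bullet> x + d) \<le> f x" "r < c \<bullet> x0 + d"
proof -
  obtain a1 a0 b where
    ab: "a1 \<bullet> x0 + a0 * r < b" "\<And>x t. f x \<le> ereal t \<Longrightarrow> b < a1 \<bullet> x + a0 * t"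
    using epigraph_separation[OF assms(2-4)] by blast
  have a0: "a0 \<ge> 0" using assms(1) ab(2) by (rule epigraph_separation_nonneg)
  show ?thesis
  proof (cases "a0 > 0")
    case True
    have "r < (- (1/a0)) *\<^sub>R a1 \<bullet> x0 + b / a0" using ab(1) True by (simp add: field_simps)
    with epigraph_separation_minorant[OF assms(1) True ab(2)] that show ?thesis by blast
  next
    case False
    \<comment> \<open>a vertical hyperplane: tilt some affine minorant by a large multiple of it\<close>
    hence z: "a0 = 0" using a0 by simp
    obtain c d where cd: "\<And>x. ereal (c \<bullet> x + d) \<le> f x"
      using affine_minorant_exists[OF assms(1-3)] by blast
    have gap: "b - a1 \<bullet> x0 > 0" using ab(1) z by simp
    define lam where "lam = max 0 ((r - c \<bullet> x0 - d) / (b - a1 \<bullet> x0)) + 1"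
    have lam: "lam > 0" "lam * (b - a1 \<bullet> x0) > r - c \<bullet> x0 - d"
    proof -
      show "lam > 0" by (simp add: lam_def add_nonneg_pos)
      have "(r - c \<bullet> x0 - d) / (b - a1 \<bullet> x0) < lam" by (simp add: lam_def)
      thus "lam * (b - a1 \<bullet> x0) > r - c \<bullet> x0 - d" using gap by (simp add: pos_divide_less_eq)
    qed
    have "ereal ((c - lam *\<^sub>R a1) \<bullet> x + (d + lam * b)) \<le> f x" for x
    proof (cases "f x = \<infinity>")
      case False
      then obtain t where "f x \<le> ereal t" by (cases "f x") auto
      hence "a1 \<bullet> x > b" using ab(2) z by auto
      hence "(c - lam *\<^sub>R a1) \<bullet> x + (d + lam * b) \<le> c \<bullet> x + d"
        using lam(1) by (simp add: inner_diff_left algebra_simps mult_left_mono)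
      thus ?thesis using cd[of x] by (meson ereal_less_eq(3) order.trans)
    qed simp
    moreover have "r < (c - lam *\<^sub>R a1) \<bullet> x0 + (d + lam * b)"
      using lam(2) by (simp add: inner_diff_left algebra_simps)
    ultimately show ?thesis using that by blast
  qed
qed

section \<open>The Fenchel conjugate\<close>

lemma fconj_upper: "ereal (v \<bullet> x) - f x \<le> fconj f v"
  unfolding fconj_def by (rule SUP_upper) simp

lemma fconj_eq_SUP_affine: "fconj f = (\<lambda>v. SUP x\<in>UNIV. ereal (v \<bullet> id x) - f x)"
  by (simp add: fconj_def fun_eq_iff)

lemma lsc_fun_fconj: "lsc_fun (fconj (f::'a::real_inner \<Rightarrow> ereal))"
  unfolding fconj_eq_SUP_affine by (rule lsc_fun_SUP_affine)

lemma ereal_convex_fconj: "ereal_convex (fconj (f::'a::real_inner \<Rightarrow> ereal))"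
  unfolding fconj_eq_SUP_affine by (rule ereal_convex_SUP_affine)

lemma fconj_le_of_affine_minorant:
  assumes "\<And>x. ereal (c \<bullet> x + d) \<le> f x"
  shows "fconj f c \<le> ereal (- d)"
  unfolding fconj_def
proof (rule SUP_least)
  fix x show "ereal (c \<bullet> x) - f x \<le> ereal (- d)" using assms[of x] by (cases "f x") auto
qed

lemma fconj_proper:
  fixes f :: "'a::euclidean_space \<Rightarrow> ereal"
  assumes "proper_fun f" "lsc_fun f" "ereal_convex f"
  shows "proper_fun (fconj f)"
  unfolding proper_fun_def
proof
  obtain x1 a1 where a1: "f x1 = ereal a1" using assms(1) by (rule proper_funE)
  show "\<forall>v. fconj f v \<noteq> -\<infinity>"
  proof
    fix v
    have "ereal (v \<bullet> x1 - a1) \<le> fconj f v" using fconj_upper[of v x1 f] a1 by simp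
    thus "fconj f v \<noteq> -\<infinity>" by auto
  qed
  obtain c d where "\<And>x. ereal (c \<bullet> x + d) \<le> f x" using affine_minorant_exists[OF assms] by blast
  hence "fconj f c \<le> ereal (- d)" by (rule fconj_le_of_affine_minorant)
  thus "\<exists>v. fconj f v \<noteq> \<infinity>" by (intro exI[of _ c]) auto
qed

lemma fenchel_young:
  assumes "\<And>v. ereal (\<phi>s v) = fconj (\<lambda>x. ereal (\<phi> x)) v"
  shows "v \<bullet> z - \<phi> z \<le> \<phi>s v"
  using fconj_upper[of v z "\<lambda>x. ereal (\<phi> x)"] assms[of v, symmetric] by simp

theorem fconj_fconj:
  fixes f :: "'a::euclidean_space \<Rightarrow> ereal"
  assumes "proper_fun f" "lsc_fun f" "ereal_convex f"
  shows "fconj (fconj f) x = f x"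
proof (rule antisym)
  show "fconj (fconj f) x \<le> f x" unfolding fconj_def[of "fconj f"]
  proof (rule SUP_least)
    fix v
    have le: "ereal (v \<bullet> x) - f x \<le> fconj f v" by (rule fconj_upper)
    have "f x \<noteq> -\<infinity>" using assms(1) by (auto simp: proper_fun_def)
    thus "ereal (x \<bullet> v) - fconj f v \<le> f x"
      using le by (cases "f x"; cases "fconj f v") (simp_all add: inner_commute)
  qed
next
  show "f x \<le> fconj (fconj f) x"
  proof (rule dense_le)
    fix c' assume c': "c' < f x"
    show "c' \<le> fconj (fconj f) x"
    proof (cases c')
      case (real r)
      with c' obtain c d where cd: "\<And>y. ereal (c \<bullet> y + d) \<le> f y" "r < c \<bullet> x + d"
        using affine_minorant_above[OF assms] by (metis ereal_less(2))
      have "ereal (x \<bullet> c) - ereal (- d) \<le> ereal (x \<bullet> c) - fconj f c"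
        using fconj_le_of_affine_minorant[OF cd(1)] by (intro ereal_minus_mono) auto
      also have "\<dots> \<le> fconj (fconj f) x" by (rule fconj_upper)
      finally have "ereal (c \<bullet> x + d) \<le> fconj (fconj f) x" by (simp add: inner_commute)
      thus ?thesis using real cd(2) by (metis ereal_less_eq(3) less_imp_le order.trans)
    qed (use c' in auto)
  qed
qed

corollary fconj_inject:
  fixes f k :: "'a::euclidean_space \<Rightarrow> ereal"
  assumes "proper_fun f" "lsc_fun f" "ereal_convex f" "proper_fun k" "lsc_fun k" "ereal_convex k"
    and "fconj k = fconj f"
  shows "k = f"
proof
  fix x
  have "k x = fconj (fconj k) x" using fconj_fconj[OF assms(4-6)] by simp
  also have "\<dots> = f x" using fconj_fconj[OF assms(1-3)] assms(7) by simp
  finally show "k x = f x" .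
qed

lemma SUP_ereal_minus_const:
  fixes A :: "'i \<Rightarrow> real" and \<beta> :: ereal
  assumes "\<bar>(SUP x. ereal (A x))\<bar> \<noteq> \<infinity>"
  shows "(SUP x. ereal (A x) - \<beta>) = (SUP x. ereal (A x)) - \<beta>"
proof (cases "\<beta> = \<infinity>")
  case True
  thus ?thesis using assms by (cases "SUP x. ereal (A x)") auto
next
  case False
  thus ?thesis by (rule SUP_ereal_minus_left[OF UNIV_not_empty])
qed

lemma fconj_translate:
  assumes "ereal (\<phi>s v) = fconj (\<lambda>x. ereal (\<phi> x)) v"
  shows "(SUP x. ereal (v \<bullet> x - \<phi> (x - y))) = ereal (\<phi>s v + v \<bullet> y)"
proof -
  have "(SUP x. ereal (v \<bullet> x - \<phi> (x - y))) = (SUP z. ereal (v \<bullet> z - \<phi> z) + ereal (v \<bullet> y))"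
  proof (rule antisym)
    show "(SUP x. ereal (v \<bullet> x - \<phi> (x - y))) \<le> (SUP z. ereal (v \<bullet> z - \<phi> z) + ereal (v \<bullet> y))"
    proof (rule SUP_least)
      fix x
      have "ereal (v \<bullet> x - \<phi> (x - y)) = ereal (v \<bullet> (x - y) - \<phi> (x - y)) + ereal (v \<bullet> y)"
        by (simp add: inner_diff_right)
      also have "\<dots> \<le> (SUP z. ereal (v \<bullet> z - \<phi> z) + ereal (v \<bullet> y))" by (rule SUP_upper) simp
      finally show "ereal (v \<bullet> x - \<phi> (x - y)) \<le> (SUP z. ereal (v \<bullet> z - \<phi> z) + ereal (v \<bullet> y))" .
    qed
    show "(SUP z. ereal (v \<bullet> z - \<phi> z) + ereal (v \<bullet> y)) \<le> (SUP x. ereal (v \<bullet> x - \<phi> (x - y)))"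
    proof (rule SUP_least)
      fix z
      have "ereal (v \<bullet> z - \<phi> z) + ereal (v \<bullet> y) = ereal (v \<bullet> (z + y) - \<phi> ((z + y) - y))"
        by (simp add: inner_add_right)
      also have "\<dots> \<le> (SUP x. ereal (v \<bullet> x - \<phi> (x - y)))" by (rule SUP_upper) simp
      finally show "ereal (v \<bullet> z - \<phi> z) + ereal (v \<bullet> y) \<le> (SUP x. ereal (v \<bullet> x - \<phi> (x - y)))" .
    qed
  qed
  also have "\<dots> = (SUP z. ereal (v \<bullet> z - \<phi> z)) + ereal (v \<bullet> y)"
    by (rule SUP_ereal_add_left) auto
  also have "(SUP z. ereal (v \<bullet> z - \<phi> z)) = ereal (\<phi>s v)" using assms by (simp add: fconj_def)
  finally show ?thesis by simp
qed

section \<open>Differentiability and subgradients of finite convex functions\<close>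

lemma finite_ereal_convexE:
  fixes f :: "'a::real_vector \<Rightarrow> ereal"
  assumes fin: "\<And>x. \<bar>f x\<bar> \<noteq> \<infinity>" and cv: "ereal_convex f"
  obtains F where "f = (\<lambda>x. ereal (F x))" "convex_on UNIV F"
proof
  define F where "F x = real_of_ereal (f x)" for x
  show fF: "f = (\<lambda>x. ereal (F x))" using fin by (simp add: fun_eq_iff F_def ereal_real)
  show "convex_on UNIV F"
  proof (rule convex_onI)
    fix t :: real and x y :: 'a assume t: "0 < t" "t < 1"
    have "0 < 1 - t \<and> 1 - t < 1" using t by simp
    with cv have "f ((1 - t) *\<^sub>R x + (1 - (1 - t)) *\<^sub>R y) \<le> ereal (1 - t) * f x + ereal (1 - (1 - t)) * f y"
      unfolding ereal_convex_def by blast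
    thus "F ((1 - t) *\<^sub>R x + t *\<^sub>R y) \<le> (1 - t) * F x + t * F y" by (simp add: fF)
  qed simp
qed

lemma ereal_convex_real:
  assumes "convex_on UNIV F"
  shows "ereal_convex (\<lambda>x. ereal (F x))"
  unfolding ereal_convex_def using convex_onD[OF assms] by (auto simp: add.commute)

lemma le_of_forall_pos_sub_mult_le:
  fixes a b c :: real
  assumes le: "\<And>e. e > 0 \<Longrightarrow> a - e * b \<le> c" and b: "b \<ge> 0"
  shows "a \<le> c"
proof (rule field_le_epsilon)
  fix e :: real assume e: "e > 0"
  have "e / (b + 1) * b \<le> e" using e b by (simp add: field_simps)
  moreover have "a - e / (b + 1) * b \<le> c" using e b by (intro le) simp
  ultimately show "a \<le> c + e" by linarith
qed

lemma has_derivative_directional_at_right: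
  assumes "(F has_derivative (\<lambda>h. D \<bullet> h)) (at z)"
  shows "((\<lambda>t. (F (z + t *\<^sub>R w) - F z) / t) \<longlongrightarrow> D \<bullet> w) (at_right 0)"
proof -
  have l: "((\<lambda>t::real. z + t *\<^sub>R w) has_derivative (\<lambda>t. t *\<^sub>R w)) (at 0)"
    by (auto intro!: derivative_eq_intros)
  have "(F has_derivative (\<lambda>h. D \<bullet> h)) (at (z + 0 *\<^sub>R w))" using assms by simp
  from has_derivative_compose[OF l this]
  have "((\<lambda>t. F (z + t *\<^sub>R w)) has_derivative (\<lambda>t. D \<bullet> (t *\<^sub>R w))) (at 0)" by simp
  moreover have "(\<lambda>t. D \<bullet> (t *\<^sub>R w)) = (*) (D \<bullet> w)" by (auto simp: fun_eq_iff)
  ultimately have "((\<lambda>t. F (z + t *\<^sub>R w)) has_real_derivative (D \<bullet> w)) (at 0)"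
    by (simp add: has_field_derivative_def)
  hence "((\<lambda>h. (F (z + h *\<^sub>R w) - F z) / h) \<longlongrightarrow> D \<bullet> w) (at 0)"
    unfolding DERIV_def by simp
  thus ?thesis by (simp add: filterlim_at_split)
qed

lemma convex_on_gradient_ineq:
  assumes cv: "convex_on UNIV F" and d: "(F has_derivative (\<lambda>h. D \<bullet> h)) (at x)"
  shows "F x + D \<bullet> (y - x) \<le> F y"
proof -
  have "eventually (\<lambda>t. (F (x + t *\<^sub>R (y - x)) - F x) / t \<le> F y - F x) (at_right (0::real))"
    unfolding eventually_at_right_field
  proof (intro exI[of _ 1] conjI allI impI)
    fix t :: real assume t: "0 < t" "t < 1"
    have "F ((1 - t) *\<^sub>R x + t *\<^sub>R y) \<le> (1 - t) * F x + t * F y"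
      using convex_onD[OF cv, of t x y] t by simp
    moreover have "(1 - t) *\<^sub>R x + t *\<^sub>R y = x + t *\<^sub>R (y - x)" by (simp add: algebra_simps)
    ultimately have "F (x + t *\<^sub>R (y - x)) - F x \<le> t * (F y - F x)" by (simp add: algebra_simps)
    thus "(F (x + t *\<^sub>R (y - x)) - F x) / t \<le> F y - F x" using t by (simp add: divide_le_eq mult.commute)
  qed simp
  from tendsto_upperbound[OF has_derivative_directional_at_right[OF d] this]
  show ?thesis by simp
qed

lemma convex_on_secant_le:
  assumes cv: "convex_on UNIV F" and t: "0 < t" "t \<le> R"
  shows "F (x + t *\<^sub>R u) - F x \<le> (t / R) * (F (x + R *\<^sub>R u) - F x)"
proof -
  let ?l = "t / R"
  have l: "0 \<le> ?l" "?l \<le> 1" using t by auto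
  have "F ((1 - ?l) *\<^sub>R x + ?l *\<^sub>R (x + R *\<^sub>R u)) \<le> (1 - ?l) * F x + ?l * F (x + R *\<^sub>R u)"
    using convex_onD[OF cv l] by simp
  moreover have "?l *\<^sub>R (x + R *\<^sub>R u) = ?l *\<^sub>R x + t *\<^sub>R u" using t by (simp add: scaleR_add_right)
  moreover have "(1 - ?l) *\<^sub>R x + ?l *\<^sub>R x = x" by (simp flip: scaleR_add_left)
  ultimately have "F (x + t *\<^sub>R u) \<le> (1 - ?l) * F x + ?l * F (x + R *\<^sub>R u)"
    by (metis (no_types, lifting) add.assoc)
  thus ?thesis by (simp add: algebra_simps)
qed

lemma convex_on_midpoint_le:
  assumes cv: "convex_on UNIV F"
  shows "2 * F x \<le> F (x + h) + F (x - h)"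
proof -
  have "F ((1 - 1/2) *\<^sub>R (x + h) + (1/2) *\<^sub>R (x - h)) \<le> (1 - 1/2) * F (x + h) + (1/2) * F (x - h)"
    using convex_onD[OF cv, of "1/2"] by simp
  moreover have "(1 - 1/2) *\<^sub>R (x + h) + (1/2::real) *\<^sub>R (x - h) = x"
    by (simp add: algebra_simps) (metis scaleR_add_left field_sum_of_halves scaleR_one)
  ultimately show ?thesis by simp
qed

lemma frechet_subdiff_ereal_iff:
  "v \<in> frechet_subdiff (\<lambda>x. ereal (H x)) x \<longleftrightarrow>
    (\<forall>e>0. \<exists>d>0. \<forall>y. norm (y - x) < d \<longrightarrow> H x + v \<bullet> (y - x) - e * norm (y - x) \<le> H y)"
  by (simp add: frechet_subdiff_def)

lemma frechet_lower_support_eq_gradient: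
  assumes d: "(F has_derivative (\<lambda>h. D \<bullet> h)) (at z)"
    and s: "\<And>e. e > 0 \<Longrightarrow> \<exists>d>0. \<forall>h. norm h < d \<longrightarrow> s \<bullet> h - e * norm h \<le> F (z + h) - F z"
  shows "s = D"
proof -
  define w where "w = s - D"
  have "s \<bullet> w - e * norm w \<le> D \<bullet> w" if e: "e > 0" for e
  proof -
    obtain d where dd: "d > 0" "\<forall>h. norm h < d \<longrightarrow> s \<bullet> h - e * norm h \<le> F (z + h) - F z"
      using s[OF e] by blast
    have "eventually (\<lambda>t. s \<bullet> w - e * norm w \<le> (F (z + t *\<^sub>R w) - F z) / t) (at_right (0::real))"
      unfolding eventually_at_right_field
    proof (intro exI[of _ "d / (norm w + 1)"] conjI allI impI)
      show "0 < d / (norm w + 1)" using dd by (simp add: add_nonneg_pos)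
      fix t :: real assume t: "0 < t" "t < d / (norm w + 1)"
      have "norm (t *\<^sub>R w) \<le> t * (norm w + 1)" using t by simp
      also have "\<dots> < d" using t by (simp add: pos_less_divide_eq add_nonneg_pos)
      finally have "s \<bullet> (t *\<^sub>R w) - e * norm (t *\<^sub>R w) \<le> F (z + t *\<^sub>R w) - F z" using dd by blast
      hence "t * (s \<bullet> w - e * norm w) \<le> F (z + t *\<^sub>R w) - F z" using t by (simp add: algebra_simps)
      thus "s \<bullet> w - e * norm w \<le> (F (z + t *\<^sub>R w) - F z) / t" using t by (simp add: le_divide_eq mult.commute)
    qed
    from tendsto_lowerbound[OF has_derivative_directional_at_right[OF d] this] show ?thesis by simp
  qed
  hence "s \<bullet> w \<le> D \<bullet> w" by (rule le_of_forall_pos_sub_mult_le[OF _ norm_ge_zero])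
  hence "w \<bullet> w \<le> 0" by (simp add: w_def inner_diff_left)
  hence "w = 0" by (metis inner_gt_zero_iff not_le)
  thus ?thesis by (simp add: w_def)
qed

lemma convex_on_frechet_subgradient:
  assumes cv: "convex_on UNIV F" and v: "v \<in> frechet_subdiff (\<lambda>x. ereal (F x)) x"
  shows "F x + v \<bullet> (w - x) \<le> F w"
proof -
  have "v \<bullet> (w - x) - e * norm (w - x) \<le> F w - F x" if e: "e > 0" for e
  proof (cases "w = x")
    case False
    obtain d where d: "d > 0" "\<forall>y. norm (y - x) < d \<longrightarrow> F x + v \<bullet> (y - x) - e * norm (y - x) \<le> F y"
      using v e unfolding frechet_subdiff_ereal_iff by blast
    define t where "t = min (1/2) (d / (2 * norm (w - x)))"
    have t: "0 < t" "t \<le> 1/2" using d False by (auto simp: t_def)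
    have "t * norm (w - x) \<le> d / 2" using False
      by (simp add: t_def min_def field_simps split: if_split_asm)
    hence "norm ((x + t *\<^sub>R (w - x)) - x) < d" using t d by simp
    hence A: "F x + t * (v \<bullet> (w - x)) - e * (t * norm (w - x)) \<le> F (x + t *\<^sub>R (w - x))"
      using d t by fastforce
    have "F ((1 - t) *\<^sub>R x + t *\<^sub>R w) \<le> (1 - t) * F x + t * F w"
      using convex_onD[OF cv, of t x w] t by simp
    moreover have "(1 - t) *\<^sub>R x + t *\<^sub>R w = x + t *\<^sub>R (w - x)" by (simp add: algebra_simps)
    ultimately have "F (x + t *\<^sub>R (w - x)) \<le> (1 - t) * F x + t * F w" by simp
    with A have "t * (v \<bullet> (w - x) - e * norm (w - x)) \<le> t * (F w - F x)"
      by (simp add: algebra_simps)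
    thus ?thesis using t by simp
  qed simp
  hence "v \<bullet> (w - x) \<le> F w - F x" by (rule le_of_forall_pos_sub_mult_le[OF _ norm_ge_zero])
  thus ?thesis by simp
qed

text \<open>Convexity bounds the first-order error of \<open>F\<close> at \<open>h\<close> from below by minus the error of the
  majorant at \<open>-h\<close>.\<close>

lemma convex_on_has_derivative_of_touching_majorant:
  fixes F M :: "'a::euclidean_space \<Rightarrow> real"
  assumes cv: "convex_on UNIV F" and dM: "(M has_derivative (\<lambda>h. D \<bullet> h)) (at x)"
    and eq: "F x = M x" and le: "\<And>w. F w \<le> M w"
  shows "(F has_derivative (\<lambda>h. D \<bullet> h)) (at x)"
proof -
  define EM where "EM h = \<bar>M (x + h) - M x - D \<bullet> h\<bar> / norm h" for h
  have l1: "(EM \<longlongrightarrow> 0) (at 0)" using dM unfolding has_derivative_at EM_def by simp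
  have "((EM \<circ> uminus) \<longlongrightarrow> 0) (at 0)"
    unfolding tendsto_compose_filtermap using l1 filtermap_at_minus[where a="0::'a"] by simp
  hence l2: "((\<lambda>h. EM (- h)) \<longlongrightarrow> 0) (at 0)" by (simp add: o_def)
  have bnd: "\<bar>F (x + h) - F x - D \<bullet> h\<bar> / norm h \<le> EM h + EM (- h)" for h
  proof -
    have up: "F (x + h) - F x - D \<bullet> h \<le> \<bar>M (x + h) - M x - D \<bullet> h\<bar>" using le[of "x + h"] eq by simp
    have "2 * F x \<le> F (x + h) + F (x - h)" by (rule convex_on_midpoint_le[OF cv])
    hence lo: "F (x + h) - F x - D \<bullet> h \<ge> - \<bar>M (x + - h) - M x - D \<bullet> (- h)\<bar>"
      using le[of "x - h"] eq by (simp add: inner_minus_right)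
    have "\<bar>F (x + h) - F x - D \<bullet> h\<bar> \<le> \<bar>M (x + h) - M x - D \<bullet> h\<bar> + \<bar>M (x + - h) - M x - D \<bullet> (- h)\<bar>"
      using up lo by linarith
    hence "\<bar>F (x + h) - F x - D \<bullet> h\<bar> / norm h
        \<le> (\<bar>M (x + h) - M x - D \<bullet> h\<bar> + \<bar>M (x + - h) - M x - D \<bullet> (- h)\<bar>) / norm h"
      by (simp add: divide_right_mono)
    thus ?thesis by (simp add: EM_def add_divide_distrib)
  qed
  have "((\<lambda>h. \<bar>F (x + h) - F x - D \<bullet> h\<bar> / norm h) \<longlongrightarrow> 0) (at 0)"
  proof (rule tendsto_sandwich[of "\<lambda>_. 0" _ _ "\<lambda>h. EM h + EM (- h)"])
    show "\<forall>\<^sub>F h in at 0. 0 \<le> \<bar>F (x + h) - F x - D \<bullet> h\<bar> / norm h" by simp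
    show "\<forall>\<^sub>F h in at 0. \<bar>F (x + h) - F x - D \<bullet> h\<bar> / norm h \<le> EM h + EM (- h)" using bnd by simp
    show "((\<lambda>_. 0::real) \<longlongrightarrow> 0) (at 0)" by simp
    show "((\<lambda>h. EM h + EM (- h)) \<longlongrightarrow> 0) (at 0)" using tendsto_add[OF l1 l2] by simp
  qed
  thus ?thesis unfolding has_derivative_at by (simp add: bounded_linear_inner_right)
qed

lemma convex_on_gradient_inner_upper_semicontinuous:
  fixes F :: "'a::euclidean_space \<Rightarrow> real"
  assumes cv: "convex_on UNIV F" and grad: "\<And>x. (F has_derivative (\<lambda>h. G x \<bullet> h)) (at x)"
    and e: "e > 0"
  shows "\<exists>d>0. \<forall>y. dist y x0 < d \<longrightarrow> G y \<bullet> u < G x0 \<bullet> u + e"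
proof -
  define Q where "Q t y = (F (y + t *\<^sub>R u) - F y) / t" for t y
  have "eventually (\<lambda>t. dist (Q t x0) (G x0 \<bullet> u) < e/2) (at_right (0::real))"
    using tendstoD[OF has_derivative_directional_at_right[OF grad], of "e/2"] e by (simp add: Q_def)
  then obtain b where b: "b > 0" "\<And>t. 0 < t \<Longrightarrow> t < b \<Longrightarrow> dist (Q t x0) (G x0 \<bullet> u) < e/2"
    unfolding eventually_at_right_field by blast
  define t where "t = b / 2"
  have t: "t > 0" "t < b" using b(1) by (simp_all add: t_def)
  hence "dist (Q t x0) (G x0 \<bullet> u) < e/2" by (rule b(2))
  hence t': "Q t x0 < G x0 \<bullet> u + e/2" unfolding dist_real_def abs_less_iff by linarith
  have cF: "continuous_on UNIV F" by (rule convex_on_continuous[OF open_UNIV cv])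
  have "continuous_on UNIV (Q t)" unfolding Q_def
    using t by (intro continuous_intros continuous_on_compose2[OF cF]) auto
  then obtain d where d: "d > 0" "\<forall>y. dist y x0 < d \<longrightarrow> dist (Q t y) (Q t x0) < e/2"
    using e unfolding continuous_on_iff by (metis UNIV_I half_gt_zero)
  have "G y \<bullet> u < G x0 \<bullet> u + e" if y: "dist y x0 < d" for y
  proof -
    have "F y + G y \<bullet> ((y + t *\<^sub>R u) - y) \<le> F (y + t *\<^sub>R u)"
      by (rule convex_on_gradient_ineq[OF cv grad])
    hence "G y \<bullet> u \<le> Q t y" using t by (simp add: Q_def le_divide_eq mult.commute)
    moreover have "dist (Q t y) (Q t x0) < e/2" using d(2) y by blast
    hence "Q t y < Q t x0 + e/2" unfolding dist_real_def abs_less_iff by linarith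
    ultimately show ?thesis using t' by linarith
  qed
  with d(1) show ?thesis by blast
qed

lemma convex_on_continuous_gradient:
  fixes F :: "'a::euclidean_space \<Rightarrow> real"
  assumes cv: "convex_on UNIV F" and grad: "\<And>x. (F has_derivative (\<lambda>h. G x \<bullet> h)) (at x)"
  shows "continuous_on UNIV G"
proof -
  have component: "continuous_on UNIV (\<lambda>x. G x \<bullet> u)" for u
    unfolding continuous_on_iff
  proof (intro ballI allI impI)
    fix x0 :: 'a and e :: real assume e: "e > 0"
    obtain d1 where d1: "d1 > 0" "\<forall>y. dist y x0 < d1 \<longrightarrow> G y \<bullet> u < G x0 \<bullet> u + e"
      using convex_on_gradient_inner_upper_semicontinuous[OF cv grad e] by blast
    obtain d2 where d2: "d2 > 0" "\<forall>y. dist y x0 < d2 \<longrightarrow> G y \<bullet> - u < G x0 \<bullet> - u + e"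
      using convex_on_gradient_inner_upper_semicontinuous[OF cv grad e] by blast
    show "\<exists>d>0. \<forall>y\<in>UNIV. dist y x0 < d \<longrightarrow> dist (G y \<bullet> u) (G x0 \<bullet> u) < e"
      using d1 d2 by (intro exI[of _ "min d1 d2"]) (auto simp: dist_real_def abs_less_iff)
  qed
  have "continuous_on UNIV (\<lambda>x. \<Sum>i\<in>Basis. (G x \<bullet> i) *\<^sub>R i)"
    by (intro continuous_intros component)
  thus ?thesis by (simp add: euclidean_representation)
qed

lemma frechet_subdiff_of_quadratic_minorant:
  assumes r: "r > 0" and \<epsilon>: "\<epsilon> > 0"
    and minorant: "\<And>w. norm (w - x) < r \<Longrightarrow> H x + v \<bullet> (w - x) - norm (w - x)^2 / (2 * \<epsilon>) \<le> H w"
  shows "v \<in> frechet_subdiff (\<lambda>x. ereal (H x)) x"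
  unfolding frechet_subdiff_ereal_iff
proof (intro allI impI)
  fix e :: real assume e: "e > 0"
  show "\<exists>d>0. \<forall>y. norm (y - x) < d \<longrightarrow> H x + v \<bullet> (y - x) - e * norm (y - x) \<le> H y"
  proof (intro exI[of _ "min r (2 * \<epsilon> * e)"] conjI allI impI)
    show "0 < min r (2 * \<epsilon> * e)" using e r \<epsilon> by simp
    fix y assume y: "norm (y - x) < min r (2 * \<epsilon> * e)"
    have "norm (y - x)^2 = norm (y - x) * norm (y - x)" by (simp add: power2_eq_square)
    also have "\<dots> \<le> norm (y - x) * (2 * \<epsilon> * e)" using y by (intro mult_left_mono) auto
    finally have "norm (y - x)^2 / (2 * \<epsilon>) \<le> e * norm (y - x)"
      using \<epsilon> by (simp add: divide_le_eq mult.commute mult.left_commute)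
    with minorant[of y] y show "H x + v \<bullet> (y - x) - e * norm (y - x) \<le> H y" by simp
  qed
qed

text \<open>A quadratic lower support of the concave function \<open>-F\<close> at \<open>x\<close> with large slope \<open>v\<close> would
  force \<open>F\<close> to grow faster along \<open>-v\<close> than its bound \<open>K\<close> on the unit ball allows.\<close>

lemma norm_quadratic_support_bound:
  fixes F :: "'a::euclidean_space \<Rightarrow> real"
  assumes cv: "convex_on UNIV F" and \<epsilon>: "0 < \<epsilon>" "\<epsilon> < r" "\<epsilon> \<le> 1"
    and K: "\<And>w. w \<in> cball x 1 \<Longrightarrow> \<bar>F w\<bar> \<le> K"
    and support: "\<And>w. norm (w - x) < r \<Longrightarrow> - F x + v \<bullet> (w - x) - norm (w - x)^2 / (2 * \<epsilon>) \<le> - F w"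
  shows "norm v \<le> 2 * K + 1"
proof (cases "v = 0")
  case False
  define u where "u = (1 / norm v) *\<^sub>R v"
  have nu: "norm u = 1" using False by (simp add: u_def)
  have vu: "v \<bullet> u = norm v" using False by (simp add: u_def power2_norm_eq_inner[symmetric] power2_eq_square)
  have "- F x + v \<bullet> (\<epsilon> *\<^sub>R u) - norm (\<epsilon> *\<^sub>R u)^2 / (2 * \<epsilon>) \<le> - F (x + \<epsilon> *\<^sub>R u)"
    using support[of "x + \<epsilon> *\<^sub>R u"] nu \<epsilon> by simp
  moreover have "norm (\<epsilon> *\<^sub>R u)^2 / (2 * \<epsilon>) = \<epsilon> / 2" using nu \<epsilon> by (simp add: power2_eq_square)
  ultimately have up: "F (x + \<epsilon> *\<^sub>R u) \<le> F x - \<epsilon> * norm v + \<epsilon> / 2" using vu by simp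
  have mid: "2 * F x \<le> F (x + \<epsilon> *\<^sub>R u) + F (x - \<epsilon> *\<^sub>R u)" by (rule convex_on_midpoint_le[OF cv])
  have "F (x + \<epsilon> *\<^sub>R (- u)) - F x \<le> (\<epsilon> / 1) * (F (x + 1 *\<^sub>R (- u)) - F x)"
    by (rule convex_on_secant_le[OF cv]) (use \<epsilon> in auto)
  hence sec: "F (x - \<epsilon> *\<^sub>R u) - F x \<le> \<epsilon> * (F (x - u) - F x)" by simp
  have "\<bar>F (x - u)\<bar> \<le> K" "\<bar>F x\<bar> \<le> K" using K nu by (auto simp: dist_norm)
  hence "\<epsilon> * (F (x - u) - F x) \<le> \<epsilon> * (2 * K)" using \<epsilon> by (intro mult_left_mono) auto
  with up mid sec have "\<epsilon> * norm v \<le> \<epsilon> * (2 * K + 1/2)" by (simp add: algebra_simps)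
  hence "norm v \<le> 2 * K + 1/2" using \<epsilon> by (meson mult_left_le_imp_le)
  thus ?thesis by simp
next
  case True thus ?thesis using K[of x] by simp
qed

text \<open>The minimiser of \<open>-F + |\<cdot> - x\<^sub>0|\<^sup>2 / (2\<epsilon>)\<close> near \<open>x\<^sub>0\<close> carries a proximal, hence Fr\'echet,
  subgradient of \<open>-F\<close>.\<close>

lemma frechet_subdiff_neg_convex_near:
  fixes F :: "'a::euclidean_space \<Rightarrow> real"
  assumes cv: "convex_on UNIV F" and K: "\<And>w. w \<in> cball x0 2 \<Longrightarrow> \<bar>F w\<bar> \<le> K"
    and \<epsilon>: "0 < \<epsilon>" "\<epsilon> < 1/2" "4 * \<epsilon> * K < 1/4"
  shows "\<exists>x v. norm (x - x0)^2 \<le> 4 * \<epsilon> * K \<and> v \<in> frechet_subdiff (\<lambda>x. ereal (- F x)) x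
    \<and> norm v \<le> 2 * K + 1"
proof -
  have cF: "continuous_on UNIV F" by (rule convex_on_continuous[OF open_UNIV cv])
  define q where "q w = - F w + norm (w - x0)^2 / (2 * \<epsilon>)" for w
  have cq: "continuous_on (cball x0 1) q" unfolding q_def using \<epsilon>
    by (intro continuous_intros continuous_on_subset[OF cF]) auto
  obtain xe where xe: "xe \<in> cball x0 1" "\<And>w. w \<in> cball x0 1 \<Longrightarrow> q xe \<le> q w"
    using continuous_attains_inf[OF compact_cball _ cq] by fastforce
  have "q xe \<le> q x0" using xe(2)[of x0] by simp
  hence "norm (xe - x0)^2 / (2 * \<epsilon>) \<le> F xe - F x0" by (simp add: q_def)
  also have "\<dots> \<le> 2 * K" using xe(1) K[of xe] K[of x0] by (simp add: dist_norm abs_le_iff)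
  finally have sq: "norm (xe - x0)^2 \<le> 4 * \<epsilon> * K"
    using \<epsilon> by (simp add: divide_le_eq mult.commute mult.left_commute)
  have near: "norm (xe - x0) < 1/2"
  proof (rule ccontr)
    assume "\<not> ?thesis"
    hence "(1/2)^2 \<le> norm (xe - x0)^2" by (intro power_mono) simp_all
    thus False using sq \<epsilon> by (simp add: power2_eq_square)
  qed
  define v where "v = (1 / \<epsilon>) *\<^sub>R (x0 - xe)"
  have support: "- F xe + v \<bullet> (w - xe) - norm (w - xe)^2 / (2 * \<epsilon>) \<le> - F w"
    if w: "norm (w - xe) < 1/2" for w
  proof -
    have "norm (w - x0) \<le> norm (w - xe) + norm (xe - x0)"
      using norm_triangle_ineq[of "w - xe" "xe - x0"] by simp
    hence "q xe \<le> q w" using w near by (intro xe(2)) (simp add: dist_norm norm_minus_commute)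
    moreover have "norm (w - x0)^2 = norm (w - xe)^2 + 2 * ((w - xe) \<bullet> (xe - x0)) + norm (xe - x0)^2"
      using dot_norm[of "w - xe" "xe - x0"] by simp
    moreover have "v \<bullet> (w - xe) = - (((w - xe) \<bullet> (xe - x0)) / \<epsilon>)"
    proof -
      have "v \<bullet> (w - xe) = (1 / \<epsilon>) * ((x0 - xe) \<bullet> (w - xe))" by (simp add: v_def)
      also have "\<dots> = (1 / \<epsilon>) * (- ((w - xe) \<bullet> (xe - x0)))"
        by (metis inner_commute inner_minus_left minus_diff_eq)
      finally show ?thesis by simp
    qed
    ultimately show ?thesis using \<epsilon> by (simp add: q_def add_divide_distrib diff_divide_distrib)
  qed
  have "v \<in> frechet_subdiff (\<lambda>x. ereal (- F x)) xe"
    by (rule frechet_subdiff_of_quadratic_minorant[of "1/2" \<epsilon>]) (use \<epsilon> support in auto)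
  moreover have "norm v \<le> 2 * K + 1"
  proof (rule norm_quadratic_support_bound[OF cv \<epsilon>(1,2)])
    show "w \<in> cball xe 1 \<Longrightarrow> \<bar>F w\<bar> \<le> K" for w
      using near norm_triangle_ineq[of "w - xe" "xe - x0"]
      by (intro K) (simp add: dist_norm norm_minus_commute)
  qed (use support \<epsilon> in auto)
  ultimately show ?thesis using sq by blast
qed

lemma frechet_subdiff_neg_convex_approx:
  fixes F :: "'a::euclidean_space \<Rightarrow> real"
  assumes cv: "convex_on UNIV F"
  obtains X V B where "X \<longlonglongrightarrow> x0" "\<And>n. V n \<in> frechet_subdiff (\<lambda>x. ereal (- F x)) (X n)"
    "\<And>n. norm (V n) \<le> B"
proof -
  have cF: "continuous_on UNIV F" by (rule convex_on_continuous[OF open_UNIV cv])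
  have "compact (F ` cball x0 2)" by (intro compact_continuous_image continuous_on_subset[OF cF]) auto
  then obtain B where B: "\<forall>y\<in>F ` cball x0 2. norm y \<le> B" using compact_imp_bounded bounded_iff by metis
  define K where "K = max B 0"
  have K: "\<And>w. w \<in> cball x0 2 \<Longrightarrow> \<bar>F w\<bar> \<le> K" "K \<ge> 0" using B by (force simp: K_def)+
  define eps where "eps n = 1 / (real n + 16 * K + 16)" for n :: nat
  have den: "real n + 16 * K + 16 \<ge> 16" for n using K(2) by simp
  have epsp: "0 < eps n" "eps n < 1/2" "4 * eps n * K < 1/4" for n
  proof -
    show "0 < eps n" using den[of n] by (simp add: eps_def)
    show "eps n < 1/2" using den[of n] by (simp add: eps_def divide_less_eq)
    have "4 * K < (real n + 16 * K + 16) / 4" using K(2) by simp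
    hence "4 * K / (real n + 16 * K + 16) < 1/4" using den[of n] by (simp add: divide_less_eq)
    thus "4 * eps n * K < 1/4" by (simp add: eps_def)
  qed
  obtain X V where XV: "\<And>n. norm (X n - x0)^2 \<le> 4 * eps n * K"
    "\<And>n. V n \<in> frechet_subdiff (\<lambda>x. ereal (- F x)) (X n)" "\<And>n. norm (V n) \<le> 2 * K + 1"
    using frechet_subdiff_neg_convex_near[OF cv K(1) epsp] by metis
  have e0: "eps \<longlonglongrightarrow> 0"
  proof (rule tendsto_sandwich[of "\<lambda>_. 0" _ _ "\<lambda>n. inverse (real (Suc n))"])
    show "\<forall>\<^sub>F n in sequentially. 0 \<le> eps n" using epsp(1) by (intro always_eventually allI less_imp_le)
    show "\<forall>\<^sub>F n in sequentially. eps n \<le> inverse (real (Suc n))"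
      using den K(2) by (auto simp: eps_def intro!: always_eventually divide_left_mono simp: field_simps)
  qed (auto simp del: of_nat_Suc intro: LIMSEQ_inverse_real_of_nat)
  have X: "X \<longlonglongrightarrow> x0"
  proof -
    have s0: "(\<lambda>n. sqrt (4 * eps n * K)) \<longlonglongrightarrow> 0"
      using tendsto_real_sqrt[OF tendsto_mult[OF tendsto_mult[OF tendsto_const e0] tendsto_const]] by simp
    have "(\<lambda>n. norm (X n - x0)) \<longlonglongrightarrow> 0"
    proof (rule tendsto_sandwich[of "\<lambda>_. 0" _ _ "\<lambda>n. sqrt (4 * eps n * K)"])
      show "\<forall>\<^sub>F n in sequentially. norm (X n - x0) \<le> sqrt (4 * eps n * K)"
        using XV(1) by (intro always_eventually allI real_le_rsqrt)
    qed (use s0 in auto)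
    thus ?thesis by (simp add: tendsto_norm_zero_iff LIM_zero_iff)
  qed
  with XV(2,3) that show ?thesis by blast
qed

theorem limiting_subdiff_neg_convex_nonempty:
  fixes F :: "'a::euclidean_space \<Rightarrow> real"
  assumes cv: "convex_on UNIV F"
  obtains l where "l \<in> limiting_subdiff (\<lambda>x. ereal (- F x)) x0"
proof -
  obtain X V B where X: "X \<longlonglongrightarrow> x0" and V: "\<And>n. V n \<in> frechet_subdiff (\<lambda>x. ereal (- F x)) (X n)"
    and B: "\<And>n. norm (V n) \<le> B"
    using frechet_subdiff_neg_convex_approx[OF cv] by blast
  have "bounded (range V)" using B by (auto simp: bounded_iff)
  then obtain l r where lr: "strict_mono r" "(V \<circ> r) \<longlonglongrightarrow> l"
    using bounded_imp_convergent_subsequence by blast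
  have Xr: "(X \<circ> r) \<longlonglongrightarrow> x0" by (rule LIMSEQ_subseq_LIMSEQ[OF X lr(1)])
  have "(\<lambda>k. F ((X \<circ> r) k)) \<longlonglongrightarrow> F x0"
    by (rule continuous_on_tendsto_compose[OF convex_on_continuous[OF open_UNIV cv] Xr]) auto
  hence "(\<lambda>k. ereal (- F ((X \<circ> r) k))) \<longlonglongrightarrow> ereal (- F x0)"
    by (simp add: tendsto_minus)
  hence "l \<in> limiting_subdiff (\<lambda>x. ereal (- F x)) x0"
    unfolding limiting_subdiff_def using Xr lr(2) V
    by (intro CollectI exI[of _ "X \<circ> r"] exI[of _ "V \<circ> r"]) auto
  thus ?thesis by (rule that)
qed

lemma a_weakly_convex_of_convex_on:
  fixes F \<phi> :: "'a::euclidean_space \<Rightarrow> real"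
  assumes cv: "convex_on UNIV F" and pcv: "convex_on UNIV \<phi>"
    and pd: "\<And>x. (\<phi> has_derivative (\<lambda>h. D\<phi> x \<bullet> h)) (at x)" and inv: "\<And>v. D\<phi> (D\<phi>s v) = v"
  shows "a_weakly_convex \<phi> D\<phi>s (\<lambda>x. ereal (F x))"
  unfolding a_weakly_convex_def
proof (intro conjI allI impI)
  show "proper_fun (\<lambda>x. ereal (F x))" by (simp add: proper_fun_def)
  show "lsc_fun (\<lambda>x. ereal (F x))" by (rule lsc_fun_continuous[OF convex_on_continuous[OF open_UNIV cv]])
  fix xb vb w assume "vb \<in> limiting_subdiff (\<lambda>x. ereal (F x)) xb"
  then obtain xs vs where xs: "xs \<longlonglongrightarrow> xb" "(\<lambda>k. ereal (F (xs k))) \<longlonglongrightarrow> ereal (F xb)"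
    "\<And>k. vs k \<in> frechet_subdiff (\<lambda>x. ereal (F x)) (xs k)" "vs \<longlonglongrightarrow> vb"
    unfolding limiting_subdiff_def by blast
  have "(\<lambda>k. F (xs k) + vs k \<bullet> (w - xs k)) \<longlonglongrightarrow> F xb + vb \<bullet> (w - xb)"
    using xs(2) by (intro tendsto_intros xs(1) xs(4)) simp
  hence sg: "F xb + vb \<bullet> (w - xb) \<le> F w"
    using convex_on_frechet_subgradient[OF cv xs(3)] by (intro LIMSEQ_le_const2) auto
  define z where "z = D\<phi>s (- vb)"
  have "\<phi> z + D\<phi> z \<bullet> ((w - xb + z) - z) \<le> \<phi> (w - xb + z)" by (rule convex_on_gradient_ineq[OF pcv pd])
  hence "\<phi> z - vb \<bullet> (w - xb) \<le> \<phi> (w - xb + z)" by (simp add: z_def inv)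
  with sg show "ereal (F xb) - ereal (\<phi> (w - xb + D\<phi>s (- vb))) + ereal (\<phi> (D\<phi>s (- vb))) \<le> ereal (F w)"
    by (simp add: z_def)
qed

section \<open>Infimal convolution with \<open>\<phi>\<close>\<close>

lemma infconv_le: "infconv g \<phi> x \<le> g y + ereal (\<phi> (x - y))"
  unfolding infconv_def by (rule INF_lower) simp

lemma infconv_ge_of_affine_minorant:
  assumes \<phi>s: "\<And>v. ereal (\<phi>s v) = fconj (\<lambda>x. ereal (\<phi> x)) v"
    and minorant: "\<And>y. ereal (c \<bullet> y + d) \<le> g y"
  shows "ereal (c \<bullet> x + d - \<phi>s c) \<le> infconv g \<phi> x"
  unfolding infconv_def
proof (rule INF_greatest)
  fix y
  have "c \<bullet> (x - y) - \<phi> (x - y) \<le> \<phi>s c" by (rule fenchel_young[OF \<phi>s])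
  hence "ereal (c \<bullet> x + d - \<phi>s c) \<le> ereal (c \<bullet> y + d) + ereal (\<phi> (x - y))"
    by (simp add: inner_diff_right)
  also have "\<dots> \<le> g y + ereal (\<phi> (x - y))" using minorant[of y] by (intro add_right_mono)
  finally show "ereal (c \<bullet> x + d - \<phi>s c) \<le> g y + ereal (\<phi> (x - y))" .
qed

lemma infconv_finite:
  assumes \<phi>s: "\<And>v. ereal (\<phi>s v) = fconj (\<lambda>x. ereal (\<phi> x)) v"
    and gp: "proper_fun g" and minorant: "\<And>y. ereal (c \<bullet> y + d) \<le> g y"
  shows "\<bar>infconv g \<phi> x\<bar> \<noteq> \<infinity>"
proof -
  obtain y0 b0 where "g y0 = ereal b0" using gp by (rule proper_funE)
  hence "infconv g \<phi> x \<noteq> \<infinity>" using infconv_le[of g \<phi> x y0] by auto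
  moreover have "infconv g \<phi> x \<noteq> -\<infinity>"
    using infconv_ge_of_affine_minorant[OF \<phi>s minorant, of x] by auto
  ultimately show ?thesis by auto
qed

lemma infconv_sublevel_bounded:
  assumes minorant: "\<And>y. ereal (c \<bullet> y + d) \<le> g y" and coer: "super_coercive \<phi>"
  obtains R where "\<And>y. g y + ereal (\<phi> (x - y)) \<le> ereal b \<Longrightarrow> norm (x - y) \<le> R"
proof -
  have "eventually (\<lambda>z. norm c + 1 \<le> \<phi> z / norm z) at_infinity"
    using coer unfolding super_coercive_def filterlim_at_top by blast
  then obtain R0 where R0: "\<And>z. R0 \<le> norm z \<Longrightarrow> norm c + 1 \<le> \<phi> z / norm z"
    unfolding eventually_at_infinity by blast
  define R where "R = max (max R0 1) (b - c \<bullet> x - d)"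
  have "norm (x - y) \<le> R" if y: "g y + ereal (\<phi> (x - y)) \<le> ereal b" for y
  proof (rule ccontr)
    assume "\<not> ?thesis"
    hence n: "norm (x - y) > 0" "R0 \<le> norm (x - y)" "norm (x - y) > b - c \<bullet> x - d"
      by (auto simp: R_def)
    have "norm c + 1 \<le> \<phi> (x - y) / norm (x - y)" using R0 n(2) by blast
    hence ph: "(norm c + 1) * norm (x - y) \<le> \<phi> (x - y)" using n(1) by (simp add: le_divide_eq)
    have "ereal (c \<bullet> y + d) + ereal (\<phi> (x - y)) \<le> ereal b"
      using minorant[of y] y by (meson add_right_mono order.trans)
    hence A: "c \<bullet> y + d + \<phi> (x - y) \<le> b" by simp
    have "c \<bullet> (x - y) \<le> norm c * norm (x - y)"
      by (rule Cauchy_Schwarz_ineq2[THEN order_trans[OF abs_ge_self]])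
    hence "c \<bullet> x - norm c * norm (x - y) \<le> c \<bullet> y" by (simp add: inner_diff_right)
    with A ph have "c \<bullet> x + d + norm (x - y) \<le> b" by (simp add: algebra_simps)
    with n(3) show False by simp
  qed
  thus ?thesis by (rule that)
qed

text \<open>The infimum defining \<open>g \<box> \<phi>\<close> is attained: minimising sequences stay bounded by
  super-coercivity, and \<open>y \<mapsto> g y + \<phi> (x - y)\<close> is lower semicontinuous.\<close>

theorem infconv_attained:
  fixes g :: "'a::euclidean_space \<Rightarrow> ereal"
  assumes \<phi>s: "\<And>v. ereal (\<phi>s v) = fconj (\<lambda>x. ereal (\<phi> x)) v"
    and gp: "proper_fun g" and gl: "lsc_fun g" and minorant: "\<And>y. ereal (c \<bullet> y + d) \<le> g y"
    and coer: "super_coercive \<phi>" and pc: "continuous_on UNIV \<phi>"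
  obtains y where "infconv g \<phi> x = g y + ereal (\<phi> (x - y))"
proof -
  define h where "h y = g y + ereal (\<phi> (x - y))" for y
  have hl: "lsc_fun h" unfolding h_def
    by (intro lsc_fun_add_continuous[OF gl] continuous_on_compose2[OF pc] continuous_intros) auto
  have m: "infconv g \<phi> x = (INF y. h y)" by (simp add: infconv_def h_def)
  obtain mr where mr: "infconv g \<phi> x = ereal mr"
    using infconv_finite[OF \<phi>s gp minorant, of x] by (cases "infconv g \<phi> x") auto
  obtain R where R: "\<And>y. h y \<le> ereal (mr + 1) \<Longrightarrow> norm (x - y) \<le> R"
    using infconv_sublevel_bounded[OF minorant coer] unfolding h_def by blast
  have "\<exists>y. h y < ereal (mr + 1 / (real n + 1))" for n
  proof -
    have "(INF y. h y) < ereal (mr + 1 / (real n + 1))" using mr m by simp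
    thus ?thesis by (simp add: INF_less_iff)
  qed
  then obtain Y where Y: "\<And>n. h (Y n) < ereal (mr + 1 / (real n + 1))" by metis
  have "norm (Y n) \<le> norm x + R" for n
  proof -
    have "1 / (real n + 1) \<le> 1" by simp
    hence "h (Y n) \<le> ereal (mr + 1)" using Y[of n] by (meson ereal_less_eq(3) add_left_mono less_imp_le order_trans)
    hence "norm (x - Y n) \<le> R" by (rule R)
    thus ?thesis using norm_triangle_ineq4[of x "x - Y n"] by simp
  qed
  hence "bounded (range Y)" by (auto simp: bounded_iff)
  then obtain y r where r: "strict_mono r" "(Y \<circ> r) \<longlonglongrightarrow> y"
    using bounded_imp_convergent_subsequence by blast
  have "h y \<le> ereal mr + ereal e" if e: "e > 0" for e
  proof -
    obtain N where N: "inverse (real (Suc N)) < e" using reals_Archimedean[OF e] by blast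
    have "h ((Y \<circ> r) n) \<le> ereal (mr + e)" if n: "n \<ge> N" for n
    proof -
      have "N \<le> r n" using n seq_suble[OF r(1), of n] by simp
      hence "1 / (real (r n) + 1) \<le> inverse (real (Suc N))" by (simp add: inverse_eq_divide divide_left_mono)
      have "h (Y (r n)) < ereal (mr + 1 / (real (r n) + 1))" by (rule Y)
      also have "\<dots> \<le> ereal (mr + e)" using \<open>1 / (real (r n) + 1) \<le> _\<close> N by simp
      finally show ?thesis by simp
    qed
    hence "h y \<le> ereal (mr + e)" by (intro lsc_fun_LIMSEQ_le[OF hl r(2)] eventually_sequentiallyI)
    thus ?thesis by simp
  qed
  hence "h y \<le> infconv g \<phi> x" unfolding mr by (rule ereal_le_epsilon2)
  moreover have "infconv g \<phi> x \<le> h y" unfolding h_def by (rule infconv_le)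
  ultimately show ?thesis using that unfolding h_def by (metis order.antisym)
qed

lemma fconj_infconv:
  fixes g :: "'a::real_inner \<Rightarrow> ereal"
  assumes \<phi>s: "\<And>v. ereal (\<phi>s v) = fconj (\<lambda>x. ereal (\<phi> x)) v" and gm: "\<And>y. g y \<noteq> -\<infinity>"
  shows "fconj (infconv g \<phi>) v = fconj g v + ereal (\<phi>s v)"
proof -
  have sh: "(SUP x. ereal (v \<bullet> x - \<phi> (x - y))) = ereal (\<phi>s v + v \<bullet> y)" for y
    by (rule fconj_translate[OF \<phi>s])
  have "fconj (infconv g \<phi>) v = (SUP x. ereal (v \<bullet> x) - (INF y. g y + ereal (\<phi> (x - y))))"
    by (simp add: fconj_def infconv_def)
  also have "\<dots> = (SUP x. SUP y. ereal (v \<bullet> x) - (g y + ereal (\<phi> (x - y))))"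
    by (subst SUP_ereal_minus_right) auto
  also have "\<dots> = (SUP y. SUP x. ereal (v \<bullet> x) - (g y + ereal (\<phi> (x - y))))" by (rule SUP_commute)
  also have "\<dots> = (SUP y. ereal (\<phi>s v + v \<bullet> y) - g y)"
  proof (rule SUP_cong[OF refl])
    fix y
    have "(SUP x. ereal (v \<bullet> x) - (g y + ereal (\<phi> (x - y)))) = (SUP x. ereal (v \<bullet> x - \<phi> (x - y)) - g y)"
      using gm[of y] by (intro SUP_cong refl) (cases "g y"; simp)
    also have "\<dots> = (SUP x. ereal (v \<bullet> x - \<phi> (x - y))) - g y"
      by (rule SUP_ereal_minus_const) (simp add: sh)
    finally show "(SUP x. ereal (v \<bullet> x) - (g y + ereal (\<phi> (x - y)))) = ereal (\<phi>s v + v \<bullet> y) - g y"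
      by (simp add: sh)
  qed
  also have "\<dots> = (SUP y. ereal (\<phi>s v) + (ereal (v \<bullet> y) - g y))"
    using gm by (intro SUP_cong refl) (case_tac "g x"; simp)
  also have "\<dots> = ereal (\<phi>s v) + (SUP y. ereal (v \<bullet> y) - g y)"
    by (rule SUP_ereal_add_right) auto
  also have "\<dots> = fconj g v + ereal (\<phi>s v)" by (simp add: fconj_def add.commute)
  finally show ?thesis .
qed

lemma ereal_convex_infconv:
  fixes g :: "'a::real_vector \<Rightarrow> ereal"
  assumes gc: "ereal_convex g" and gm: "\<And>y. g y \<noteq> -\<infinity>" and pcv: "convex_on UNIV \<phi>"
    and fin: "\<And>x. \<bar>infconv g \<phi> x\<bar> \<noteq> \<infinity>"
  shows "ereal_convex (infconv g \<phi>)"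
  unfolding ereal_convex_def
proof (intro allI impI)
  fix x x' :: 'a and t :: real assume t: "0 < t \<and> t < 1"
  let ?k = "infconv g \<phi>"
  obtain a where a: "?k x = ereal a" using fin[of x] by (cases "?k x") auto
  obtain a' where a': "?k x' = ereal a'" using fin[of x'] by (cases "?k x'") auto
  have "?k (t *\<^sub>R x + (1 - t) *\<^sub>R x') \<le> ereal (t * a + (1 - t) * a') + ereal e" if e: "e > 0" for e
  proof -
    have "?k x < ereal (a + e)" using a e by simp
    then obtain y where y: "g y + ereal (\<phi> (x - y)) < ereal (a + e)"
      unfolding infconv_def by (auto simp: INF_less_iff)
    have "?k x' < ereal (a' + e)" using a' e by simp
    then obtain y' where y': "g y' + ereal (\<phi> (x' - y')) < ereal (a' + e)"
      unfolding infconv_def by (auto simp: INF_less_iff)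
    obtain b where b: "g y = ereal b" using y gm[of y] by (cases "g y") auto
    obtain b' where b': "g y' = ereal b'" using y' gm[of y'] by (cases "g y'") auto
    have gy: "g (t *\<^sub>R y + (1 - t) *\<^sub>R y') \<le> ereal (t * b + (1 - t) * b')"
      using gc t b b' unfolding ereal_convex_def by (metis times_ereal.simps(1) plus_ereal.simps(1))
    have "\<phi> ((1 - t) *\<^sub>R (x' - y') + t *\<^sub>R (x - y)) \<le> (1 - t) * \<phi> (x' - y') + t * \<phi> (x - y)"
      using convex_onD[OF pcv, of t "x' - y'" "x - y"] t by simp
    moreover have "(1 - t) *\<^sub>R (x' - y') + t *\<^sub>R (x - y)
        = (t *\<^sub>R x + (1 - t) *\<^sub>R x') - (t *\<^sub>R y + (1 - t) *\<^sub>R y')"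
      by (simp add: algebra_simps)
    ultimately have ph: "\<phi> ((t *\<^sub>R x + (1 - t) *\<^sub>R x') - (t *\<^sub>R y + (1 - t) *\<^sub>R y'))
        \<le> (1 - t) * \<phi> (x' - y') + t * \<phi> (x - y)"
      by simp
    have "?k (t *\<^sub>R x + (1 - t) *\<^sub>R x')
        \<le> g (t *\<^sub>R y + (1 - t) *\<^sub>R y') + ereal (\<phi> ((t *\<^sub>R x + (1 - t) *\<^sub>R x') - (t *\<^sub>R y + (1 - t) *\<^sub>R y')))"
      by (rule infconv_le)
    also have "\<dots> \<le> ereal (t * b + (1 - t) * b') + ereal ((1 - t) * \<phi> (x' - y') + t * \<phi> (x - y))"
      using gy ph by (intro add_mono) auto
    also have "\<dots> \<le> ereal (t * a + (1 - t) * a') + ereal e"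
    proof -
      have "t * (b + \<phi> (x - y)) \<le> t * (a + e)" using y b t by (intro mult_left_mono) auto
      moreover have "(1 - t) * (b' + \<phi> (x' - y')) \<le> (1 - t) * (a' + e)"
        using y' b' t by (intro mult_left_mono) auto
      ultimately show ?thesis by (simp add: algebra_simps)
    qed
    finally show ?thesis .
  qed
  hence "?k (t *\<^sub>R x + (1 - t) *\<^sub>R x') \<le> ereal (t * a + (1 - t) * a')" by (rule ereal_le_epsilon2)
  thus "?k (t *\<^sub>R x + (1 - t) *\<^sub>R x') \<le> ereal t * ?k x + ereal (1 - t) * ?k x'" using a a' by simp
qed

lemma infconv_finite_convex:
  fixes g :: "'a::euclidean_space \<Rightarrow> ereal"
  assumes \<phi>s: "\<And>v. ereal (\<phi>s v) = fconj (\<lambda>x. ereal (\<phi> x)) v" and pcv: "convex_on UNIV \<phi>"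
    and gp: "proper_fun g" and gl: "lsc_fun g" and gc: "ereal_convex g"
  obtains F where "infconv g \<phi> = (\<lambda>x. ereal (F x))" "convex_on UNIV F"
proof -
  obtain c d where minorant: "\<And>y. ereal (c \<bullet> y + d) \<le> g y"
    using affine_minorant_exists[OF gp gl gc] by blast
  have fin: "\<bar>infconv g \<phi> x\<bar> \<noteq> \<infinity>" for x by (rule infconv_finite[OF \<phi>s gp minorant])
  have "g y \<noteq> -\<infinity>" for y using gp by (simp add: proper_fun_def)
  hence "ereal_convex (infconv g \<phi>)" by (rule ereal_convex_infconv[OF gc _ pcv fin])
  with fin that show ?thesis using finite_ereal_convexE by blast
qed

lemma neg_a_weakly_convex_touching_majorants:
  fixes \<phi> :: "'a::euclidean_space \<Rightarrow> real" and f :: "'a \<Rightarrow> ereal"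
  assumes fp: "proper_fun f" and fc: "ereal_convex f" and aw: "a_weakly_convex \<phi> D\<phi>s (\<lambda>x. - f x)"
  obtains F Z where "f = (\<lambda>x. ereal (F x))" "convex_on UNIV F"
    "\<And>x0 w. F w \<le> F x0 + \<phi> (w - x0 + Z x0) - \<phi> (Z x0)"
proof -
  have "\<bar>f x\<bar> \<noteq> \<infinity>" for x
    using aw fp unfolding a_weakly_convex_def proper_fun_def by (cases "f x") auto
  then obtain F where fF: "f = (\<lambda>x. ereal (F x))" and cv: "convex_on UNIV F"
    using fc finite_ereal_convexE by blast
  have "\<exists>z. \<forall>w. F w \<le> F x0 + \<phi> (w - x0 + z) - \<phi> z" for x0
  proof -
    obtain l where l: "l \<in> limiting_subdiff (\<lambda>x. ereal (- F x)) x0"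
      using cv by (rule limiting_subdiff_neg_convex_nonempty)
    have "- F x0 - \<phi> (w - x0 + D\<phi>s (- l)) + \<phi> (D\<phi>s (- l)) \<le> - F w" for w
      using aw l unfolding a_weakly_convex_def fF by fastforce
    thus ?thesis by (intro exI[of _ "D\<phi>s (- l)"]) (auto simp: algebra_simps)
  qed
  then obtain Z where "\<And>x0 w. F w \<le> F x0 + \<phi> (w - x0 + Z x0) - \<phi> (Z x0)" by metis
  with fF cv that show ?thesis by blast
qed

lemma a_smooth_of_neg_a_weakly_convex:
  fixes \<phi> :: "'a::euclidean_space \<Rightarrow> real" and f :: "'a \<Rightarrow> ereal"
  assumes pcv: "convex_on UNIV \<phi>" and pd: "\<And>x. (\<phi> has_derivative (\<lambda>h. D\<phi> x \<bullet> h)) (at x)"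
    and inv: "\<And>v. D\<phi> (D\<phi>s v) = v"
    and fp: "proper_fun f" and fc: "ereal_convex f" and aw: "a_weakly_convex \<phi> D\<phi>s (\<lambda>x. - f x)"
  shows "a_smooth \<phi> D\<phi>s f"
proof -
  obtain F Z where fF: "f = (\<lambda>x. ereal (F x))" and cv: "convex_on UNIV F"
    and maj: "\<And>x0 w. F w \<le> F x0 + \<phi> (w - x0 + Z x0) - \<phi> (Z x0)"
    using neg_a_weakly_convex_touching_majorants[OF fp fc aw] by blast
  have "\<exists>D. (F has_derivative (\<lambda>h. D \<bullet> h)) (at x)" for x
  proof -
    have i: "((\<lambda>w. w - x + Z x) has_derivative (\<lambda>h. h)) (at x)" by (auto intro!: derivative_eq_intros)
    have "(\<phi> has_derivative (\<lambda>h. D\<phi> (Z x) \<bullet> h)) (at (x - x + Z x))" using pd[of "Z x"] by simp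
    from has_derivative_compose[OF i this]
    have "((\<lambda>w. F x + \<phi> (w - x + Z x) - \<phi> (Z x)) has_derivative (\<lambda>h. 0 + D\<phi> (Z x) \<bullet> h - 0)) (at x)"
      by (intro has_derivative_diff has_derivative_add has_derivative_const) simp
    hence "((\<lambda>w. F x + \<phi> (w - x + Z x) - \<phi> (Z x)) has_derivative (\<lambda>h. D\<phi> (Z x) \<bullet> h)) (at x)"
      by simp
    from convex_on_has_derivative_of_touching_majorant[OF cv this] maj show ?thesis by auto
  qed
  then obtain G where G: "\<And>x. (F has_derivative (\<lambda>h. G x \<bullet> h)) (at x)" by metis
  moreover have "continuous_on UNIV G" by (rule convex_on_continuous_gradient[OF cv G])
  moreover have "a_weakly_convex \<phi> D\<phi>s f" unfolding fF by (rule a_weakly_convex_of_convex_on[OF cv pcv pd inv])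
  ultimately show ?thesis using aw unfolding a_smooth_def fF by auto
qed

lemma left_Phi_convex_of_neg_a_weakly_convex:
  fixes \<phi> :: "'a::euclidean_space \<Rightarrow> real" and f :: "'a \<Rightarrow> ereal"
  assumes fp: "proper_fun f" and fc: "ereal_convex f" and aw: "a_weakly_convex \<phi> D\<phi>s (\<lambda>x. - f x)"
  shows "left_Phi_convex \<phi> (\<lambda>x. - f x)"
proof -
  obtain F Z where fF: "f = (\<lambda>x. ereal (F x))"
    and maj: "\<And>x0 w. F w \<le> F x0 + \<phi> (w - x0 + Z x0) - \<phi> (Z x0)"
    using neg_a_weakly_convex_touching_majorants[OF fp fc aw] by blast
  define S where "S = (\<lambda>x0. (x0 - Z x0, ereal (F x0 - \<phi> (Z x0)))) ` UNIV"
  have "- f x = (SUP p\<in>S. ereal (- \<phi> (x - fst p)) - snd p)" for x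
  proof -
    have "(SUP p\<in>S. ereal (- \<phi> (x - fst p)) - snd p) = (SUP x0. ereal (- \<phi> (x - x0 + Z x0) - F x0 + \<phi> (Z x0)))"
      unfolding S_def by (simp add: image_comp o_def algebra_simps)
    also have "\<dots> = ereal (- F x)"
    proof (rule antisym)
      show "(SUP x0. ereal (- \<phi> (x - x0 + Z x0) - F x0 + \<phi> (Z x0))) \<le> ereal (- F x)"
        using maj[of x] by (intro SUP_least) (simp add: algebra_simps)
      have "ereal (- F x) = ereal (- \<phi> (x - x + Z x) - F x + \<phi> (Z x))" by simp
      also have "\<dots> \<le> (SUP x0. ereal (- \<phi> (x - x0 + Z x0) - F x0 + \<phi> (Z x0)))" by (rule SUP_upper) simp
      finally show "ereal (- F x) \<le> (SUP x0. ereal (- \<phi> (x - x0 + Z x0) - F x0 + \<phi> (Z x0)))" .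
    qed
    finally show ?thesis by (simp add: fF)
  qed
  thus ?thesis unfolding left_Phi_convex_def by blast
qed

lemma fconj_of_left_Phi_convex_neg:
  fixes \<phi> \<phi>s :: "'a::euclidean_space \<Rightarrow> real" and f :: "'a \<Rightarrow> ereal"
  assumes \<phi>s: "\<And>v. ereal (\<phi>s v) = fconj (\<lambda>x. ereal (\<phi> x)) v" and fp: "proper_fun f"
    and rep: "\<And>x. - f x = (SUP p\<in>S. ereal (- \<phi> (x - fst p)) - snd p)"
  shows "fconj f v = ereal (\<phi>s v) + (SUP p\<in>S. ereal (v \<bullet> fst p) - snd p)"
proof -
  have Sne: "S \<noteq> {}"
  proof
    assume "S = {}"
    hence "f x = \<infinity>" for x using rep[of x] by (simp add: ereal_uminus_eq_reorder bot_ereal_def)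
    thus False using fp by (auto simp: proper_fun_def)
  qed
  have "fconj f v = (SUP x. ereal (v \<bullet> x) + (SUP p\<in>S. ereal (- \<phi> (x - fst p)) - snd p))"
    unfolding fconj_def by (intro SUP_cong refl) (metis minus_ereal_def rep)
  also have "\<dots> = (SUP x. SUP p\<in>S. ereal (v \<bullet> x) + (ereal (- \<phi> (x - fst p)) - snd p))"
    by (intro SUP_cong refl SUP_ereal_add_right[symmetric] Sne) simp
  also have "\<dots> = (SUP p\<in>S. SUP x. ereal (v \<bullet> x) + (ereal (- \<phi> (x - fst p)) - snd p))"
    by (rule SUP_commute)
  also have "\<dots> = (SUP p\<in>S. ereal (\<phi>s v) + (ereal (v \<bullet> fst p) - snd p))"
  proof (rule SUP_cong[OF refl])
    fix p :: "'a \<times> ereal"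
    have sh: "(SUP x. ereal (v \<bullet> x - \<phi> (x - fst p))) = ereal (\<phi>s v + v \<bullet> fst p)"
      by (rule fconj_translate[OF \<phi>s])
    have "(SUP x. ereal (v \<bullet> x) + (ereal (- \<phi> (x - fst p)) - snd p))
        = (SUP x. ereal (v \<bullet> x - \<phi> (x - fst p)) - snd p)"
      by (intro SUP_cong refl) (cases "snd p"; simp)
    also have "\<dots> = (SUP x. ereal (v \<bullet> x - \<phi> (x - fst p))) - snd p"
      by (rule SUP_ereal_minus_const) (simp add: sh)
    also have "\<dots> = ereal (\<phi>s v) + (ereal (v \<bullet> fst p) - snd p)"
      by (simp add: sh) (cases "snd p"; simp)
    finally show "(SUP x. ereal (v \<bullet> x) + (ereal (- \<phi> (x - fst p)) - snd p))
        = ereal (\<phi>s v) + (ereal (v \<bullet> fst p) - snd p)" .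
  qed
  also have "\<dots> = ereal (\<phi>s v) + (SUP p\<in>S. ereal (v \<bullet> fst p) - snd p)"
    by (rule SUP_ereal_add_right[OF Sne]) simp
  finally show ?thesis .
qed

lemma fconj_diff_convex_of_left_Phi_convex:
  fixes \<phi> \<phi>s :: "'a::euclidean_space \<Rightarrow> real" and f :: "'a \<Rightarrow> ereal"
  assumes \<phi>s: "\<And>v. ereal (\<phi>s v) = fconj (\<lambda>x. ereal (\<phi> x)) v" and fp: "proper_fun f"
    and lf: "left_Phi_convex \<phi> (\<lambda>x. - f x)"
  shows "ereal_convex (\<lambda>v. fconj f v - ereal (\<phi>s v))"
proof -
  obtain S where "\<And>x. - f x = (SUP p\<in>S. ereal (- \<phi> (x - fst p)) - snd p)"
    using lf unfolding left_Phi_convex_def by blast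
  note conj = fconj_of_left_Phi_convex_neg[OF \<phi>s fp this]
  have "fconj f v - ereal (\<phi>s v) = (SUP p\<in>S. ereal (v \<bullet> fst p) - snd p)" for v
    unfolding conj by (cases "SUP p\<in>S. ereal (v \<bullet> fst p) - snd p") auto
  hence "(\<lambda>v. fconj f v - ereal (\<phi>s v)) = (\<lambda>v. SUP p\<in>S. ereal (v \<bullet> fst p) - snd p)" by simp
  thus ?thesis using ereal_convex_SUP_affine[of fst snd S] by simp
qed

lemma infconv_representation_of_fconj_diff_convex:
  fixes \<phi> \<phi>s :: "'a::euclidean_space \<Rightarrow> real" and f :: "'a \<Rightarrow> ereal"
  assumes \<phi>s: "\<And>v. ereal (\<phi>s v) = fconj (\<lambda>x. ereal (\<phi> x)) v" and pcv: "convex_on UNIV \<phi>"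
    and pscv: "convex_on UNIV \<phi>s"
    and fp: "proper_fun f" and fl: "lsc_fun f" and fc: "ereal_convex f"
    and hc: "ereal_convex (\<lambda>v. fconj f v - ereal (\<phi>s v))"
  shows "\<exists>g. proper_fun g \<and> lsc_fun g \<and> ereal_convex g \<and> f = infconv g \<phi>"
proof -
  define h where "h v = fconj f v - ereal (\<phi>s v)" for v
  have hp: "proper_fun h" unfolding h_def[abs_def] by (rule proper_fun_diff_real[OF fconj_proper[OF fp fl fc]])
  from lsc_fun_add_continuous[OF lsc_fun_fconj[of f] continuous_on_minus[OF convex_on_continuous[OF open_UNIV pscv]]]
  have hl: "lsc_fun h" by (simp add: h_def[abs_def] minus_ereal_def)
  have hcv: "ereal_convex h" using hc by (simp add: h_def[abs_def])
  define g where "g = fconj h"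
  have gp: "proper_fun g" and gl: "lsc_fun g" and gc: "ereal_convex g"
    unfolding g_def by (rule fconj_proper[OF hp hl hcv] lsc_fun_fconj ereal_convex_fconj)+
  obtain F where F: "infconv g \<phi> = (\<lambda>x. ereal (F x))" "convex_on UNIV F"
    using infconv_finite_convex[OF \<phi>s pcv gp gl gc] by blast
  have "fconj (infconv g \<phi>) = fconj f"
  proof
    fix v
    have "fconj (infconv g \<phi>) v = fconj g v + ereal (\<phi>s v)"
      using gp by (intro fconj_infconv[OF \<phi>s]) (simp add: proper_fun_def)
    also have "\<dots> = h v + ereal (\<phi>s v)" using fconj_fconj[OF hp hl hcv] by (simp add: g_def)
    also have "\<dots> = fconj f v" by (cases "fconj f v") (auto simp: h_def)
    finally show "fconj (infconv g \<phi>) v = fconj f v" .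
  qed
  moreover have "proper_fun (infconv g \<phi>)" "lsc_fun (infconv g \<phi>)" "ereal_convex (infconv g \<phi>)"
    unfolding F(1) using lsc_fun_continuous[OF convex_on_continuous[OF open_UNIV F(2)]]
    by (simp_all add: proper_fun_def ereal_convex_real[OF F(2)])
  ultimately have "infconv g \<phi> = f" using fconj_inject[OF fp fl fc] by blast
  thus ?thesis using gp gl gc by blast
qed

text \<open>If \<open>f = g \<box> \<phi>\<close> and the infimum is attained at \<open>y\<close>, then \<open>f\<close> is touched from above at \<open>x\<close> by
  \<open>f(x) + \<phi>(\<cdot> - y) - \<phi>(x - y)\<close>; a Fr\'echet subgradient \<open>v\<close> of \<open>-f\<close> at \<open>x\<close> therefore satisfies
  \<open>-v = \<nabla>\<phi>(x - y)\<close>, i.e. \<open>x - y = \<nabla>\<phi>\<^sup>*(-v)\<close>.\<close>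

lemma infconv_frechet_majorant:
  fixes \<phi> \<phi>s :: "'a::euclidean_space \<Rightarrow> real" and g :: "'a \<Rightarrow> ereal"
  assumes \<phi>s: "\<And>v. ereal (\<phi>s v) = fconj (\<lambda>x. ereal (\<phi> x)) v" and pcv: "convex_on UNIV \<phi>"
    and pd: "\<And>x. (\<phi> has_derivative (\<lambda>h. D\<phi> x \<bullet> h)) (at x)" and coer: "super_coercive \<phi>"
    and inv: "\<And>x. D\<phi>s (D\<phi> x) = x"
    and gp: "proper_fun g" and gl: "lsc_fun g" and gc: "ereal_convex g"
    and F: "infconv g \<phi> = (\<lambda>x. ereal (F x))" "convex_on UNIV F"
    and v: "v \<in> frechet_subdiff (\<lambda>x. ereal (- F x)) x"
  shows "F w \<le> F x + \<phi> (w - x + D\<phi>s (- v)) - \<phi> (D\<phi>s (- v))"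
proof -
  obtain c d where minorant: "\<And>y. ereal (c \<bullet> y + d) \<le> g y"
    using affine_minorant_exists[OF gp gl gc] by blast
  obtain y where y: "infconv g \<phi> x = g y + ereal (\<phi> (x - y))"
    using infconv_attained[OF \<phi>s gp gl minorant coer convex_on_continuous[OF open_UNIV pcv]] by blast
  have maj: "F u \<le> F x + \<phi> (u - y) - \<phi> (x - y)" for u
  proof -
    have "ereal (F u) \<le> g y + ereal (\<phi> (u - y))" using infconv_le[of g \<phi> u y] F(1) by simp
    moreover have "ereal (F x) = g y + ereal (\<phi> (x - y))" using y F(1) by simp
    ultimately show ?thesis by (cases "g y") auto
  qed
  have "- v = D\<phi> (x - y)"
  proof (rule frechet_lower_support_eq_gradient[OF pd])
    fix e :: real assume e: "e > 0"
    obtain d where d: "d > 0" "\<forall>y. norm (y - x) < d \<longrightarrow> - F x + v \<bullet> (y - x) - e * norm (y - x) \<le> - F y"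
      using v e unfolding frechet_subdiff_ereal_iff by blast
    have "- v \<bullet> h - e * norm h \<le> \<phi> (x - y + h) - \<phi> (x - y)" if h: "norm h < d" for h
    proof -
      have "F (x - h) \<le> F x + v \<bullet> h + e * norm h" using d(2)[rule_format, of "x - h"] h by simp
      moreover have "2 * F x \<le> F (x + h) + F (x - h)" by (rule convex_on_midpoint_le[OF F(2)])
      moreover have "F (x + h) \<le> F x + \<phi> (x - y + h) - \<phi> (x - y)"
        using maj[of "x + h"] by (simp add: algebra_simps)
      ultimately show ?thesis by simp
    qed
    with d(1) show "\<exists>d>0. \<forall>h. norm h < d \<longrightarrow> - v \<bullet> h - e * norm h \<le> \<phi> (x - y + h) - \<phi> (x - y)"
      by blast
  qed
  hence z: "D\<phi>s (- v) = x - y" by (simp add: inv)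
  show ?thesis using maj[of w] unfolding z by (simp add: algebra_simps)
qed

lemma a_weakly_convex_neg_of_frechet_majorant:
  fixes \<phi> F :: "'a::euclidean_space \<Rightarrow> real"
  assumes cF: "continuous_on UNIV F" and c\<phi>: "continuous_on UNIV \<phi>" and cD: "continuous_on UNIV D\<phi>s"
    and maj: "\<And>x v w. v \<in> frechet_subdiff (\<lambda>x. ereal (- F x)) x \<Longrightarrow>
      F w \<le> F x + \<phi> (w - x + D\<phi>s (- v)) - \<phi> (D\<phi>s (- v))"
  shows "a_weakly_convex \<phi> D\<phi>s (\<lambda>x. ereal (- F x))"
  unfolding a_weakly_convex_def
proof (intro conjI allI impI)
  show "proper_fun (\<lambda>x. ereal (- F x))" by (simp add: proper_fun_def)
  show "lsc_fun (\<lambda>x. ereal (- F x))" by (rule lsc_fun_continuous) (intro continuous_intros cF)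
  fix xb vb w assume "vb \<in> limiting_subdiff (\<lambda>x. ereal (- F x)) xb"
  then obtain xs vs where xs: "xs \<longlonglongrightarrow> xb" "(\<lambda>k. ereal (- F (xs k))) \<longlonglongrightarrow> ereal (- F xb)"
    "\<And>k. vs k \<in> frechet_subdiff (\<lambda>x. ereal (- F x)) (xs k)" "vs \<longlonglongrightarrow> vb"
    unfolding limiting_subdiff_def by blast
  have "(\<lambda>k. - F (xs k)) \<longlonglongrightarrow> - F xb" using xs(2) by simp
  from tendsto_minus[OF this] have "(\<lambda>k. F (xs k)) \<longlonglongrightarrow> F xb" by simp
  moreover have Z: "(\<lambda>k. D\<phi>s (- vs k)) \<longlonglongrightarrow> D\<phi>s (- vb)"
    by (rule continuous_on_tendsto_compose[OF cD]) (auto intro: tendsto_minus xs(4))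
  ultimately have "(\<lambda>k. F (xs k) + \<phi> (w - xs k + D\<phi>s (- vs k)) - \<phi> (D\<phi>s (- vs k)))
      \<longlonglongrightarrow> F xb + \<phi> (w - xb + D\<phi>s (- vb)) - \<phi> (D\<phi>s (- vb))"
    by (intro tendsto_intros continuous_on_tendsto_compose[OF c\<phi>] xs(1)) auto
  hence "F w \<le> F xb + \<phi> (w - xb + D\<phi>s (- vb)) - \<phi> (D\<phi>s (- vb))"
    by (rule LIMSEQ_le_const) (use maj xs(3) in blast)
  thus "ereal (- F xb) - ereal (\<phi> (w - xb + D\<phi>s (- vb))) + ereal (\<phi> (D\<phi>s (- vb))) \<le> ereal (- F w)"
    by simp
qed

lemma neg_a_weakly_convex_of_infconv:
  fixes \<phi> \<phi>s :: "'a::euclidean_space \<Rightarrow> real" and g :: "'a \<Rightarrow> ereal"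
  assumes \<phi>s: "\<And>v. ereal (\<phi>s v) = fconj (\<lambda>x. ereal (\<phi> x)) v" and pcv: "convex_on UNIV \<phi>"
    and pd: "\<And>x. (\<phi> has_derivative (\<lambda>h. D\<phi> x \<bullet> h)) (at x)" and coer: "super_coercive \<phi>"
    and pscv: "convex_on UNIV \<phi>s" and psd: "\<And>v. (\<phi>s has_derivative (\<lambda>h. D\<phi>s v \<bullet> h)) (at v)"
    and inv: "\<And>x. D\<phi>s (D\<phi> x) = x"
    and gp: "proper_fun g" and gl: "lsc_fun g" and gc: "ereal_convex g"
  shows "a_weakly_convex \<phi> D\<phi>s (\<lambda>x. - infconv g \<phi> x)"
proof -
  obtain F where F: "infconv g \<phi> = (\<lambda>x. ereal (F x))" "convex_on UNIV F"
    using infconv_finite_convex[OF \<phi>s pcv gp gl gc] by blast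
  have "a_weakly_convex \<phi> D\<phi>s (\<lambda>x. ereal (- F x))"
  proof (rule a_weakly_convex_neg_of_frechet_majorant)
    show "continuous_on UNIV F" "continuous_on UNIV \<phi>"
      using F(2) pcv by (simp_all add: convex_on_continuous)
    show "continuous_on UNIV D\<phi>s" by (rule convex_on_continuous_gradient[OF pscv psd])
  qed (rule infconv_frechet_majorant[OF \<phi>s pcv pd coer inv gp gl gc F])
  thus ?thesis by (simp add: F(1))
qed

theorem mainTheorem13:
  fixes \<phi> \<phi>s :: "'a::euclidean_space \<Rightarrow> real"
    and D\<phi> D\<phi>s :: "'a \<Rightarrow> 'a"
    and f :: "'a \<Rightarrow> ereal"
  assumes phi_convex: "convex_on UNIV \<phi>"
    and phi_strict: "strictly_convex \<phi>"
    and phi_grad: "\<And>x. (\<phi> has_derivative (\<lambda>h. D\<phi> x \<bullet> h)) (at x)"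
    and phi_coercive: "super_coercive \<phi>"
    and phis_conj: "\<And>v. ereal (\<phi>s v) = fconj (\<lambda>x. ereal (\<phi> x)) v"
    and phis_convex: "convex_on UNIV \<phi>s"
    and phis_strict: "strictly_convex \<phi>s"
    and phis_grad: "\<And>v. (\<phi>s has_derivative (\<lambda>h. D\<phi>s v \<bullet> h)) (at v)"
    and phis_coercive: "super_coercive \<phi>s"
    and grad_inv1: "\<And>x. D\<phi>s (D\<phi> x) = x"
    and grad_inv2: "\<And>v. D\<phi> (D\<phi>s v) = v"
    and f_proper: "proper_fun f" and f_lsc: "lsc_fun f" and f_convex: "ereal_convex f"
  shows "(a_smooth \<phi> D\<phi>s f \<longleftrightarrow> left_Phi_convex \<phi> (\<lambda>x. - f x))
       \<and> (left_Phi_convex \<phi> (\<lambda>x. - f x) \<longleftrightarrow> ereal_convex (\<lambda>v. fconj f v - ereal (\<phi>s v)))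
       \<and> (ereal_convex (\<lambda>v. fconj f v - ereal (\<phi>s v)) \<longleftrightarrow>
            (\<exists>g. proper_fun g \<and> lsc_fun g \<and> ereal_convex g \<and> f = infconv g \<phi>))
       \<and> ((\<exists>g. proper_fun g \<and> lsc_fun g \<and> ereal_convex g \<and> f = infconv g \<phi>) \<longleftrightarrow>
            a_weakly_convex \<phi> D\<phi>s (\<lambda>x. - f x))"
proof -
  let ?i = "a_smooth \<phi> D\<phi>s f"
  let ?ii = "left_Phi_convex \<phi> (\<lambda>x. - f x)"
  let ?iii = "ereal_convex (\<lambda>v. fconj f v - ereal (\<phi>s v))"
  let ?iv = "\<exists>g. proper_fun g \<and> lsc_fun g \<and> ereal_convex g \<and> f = infconv g \<phi>"
  let ?v = "a_weakly_convex \<phi> D\<phi>s (\<lambda>x. - f x)"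
  have "?i \<Longrightarrow> ?v" by (simp add: a_smooth_def)
  moreover have "?v \<Longrightarrow> ?i"
    by (rule a_smooth_of_neg_a_weakly_convex[OF phi_convex phi_grad grad_inv2 f_proper f_convex])
  moreover have "?v \<Longrightarrow> ?ii" by (rule left_Phi_convex_of_neg_a_weakly_convex[OF f_proper f_convex])
  moreover have "?ii \<Longrightarrow> ?iii" by (rule fconj_diff_convex_of_left_Phi_convex[OF phis_conj f_proper])
  moreover have "?iii \<Longrightarrow> ?iv" by (rule infconv_representation_of_fconj_diff_convex
      [OF phis_conj phi_convex phis_convex f_proper f_lsc f_convex])
  moreover have "?iv \<Longrightarrow> ?v"
  proof -
    assume ?iv
    then obtain g where g: "proper_fun g" "lsc_fun g" "ereal_convex g" and f: "f = infconv g \<phi>" by blast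
    show ?v unfolding f by (rule neg_a_weakly_convex_of_infconv[OF phis_conj phi_convex phi_grad
          phi_coercive phis_convex phis_grad grad_inv1 g])
  qed
  ultimately show ?thesis by blast
qed

end
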